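(* Let $c_1,c_2>0$ be constants and let $G$ be a $(2n,d,b)$-clustered regular graph with $\frac bd\le c_1n^{-1/2}$ and $\lambda\le c_2n^{-1/4}$. Consider the 2-Choices dynamics on $G$ started from an initial configuration in which each node $u\in V$ chooses a color in $\{red,blue\}$ uniformly at random and independently of the others. Then, with constant probability, within $\mathcal{O}(\log\log n)$ rounds the process reaches a configuration $\mathbf c^{(t)}$ such that $s^{(t)}_1\ge\sqrt n\log n$ and $-s^{(t)}_2\ge\sqrt n\log n$.
   Context: A $(2n,d,b)$-clustered regular graph is a graph $G=(V,E)$ with $V=V_1\cup V_2$ disjoint, $|V_1|=|V_2|=n$, every node of degree $d$, every node of $V_1$ having exactly $b$ neighbors in $V_2$ and vice versa; each $V_i$ induces a $(d-b)$-regular graph, assumed connected and non-bipartite. $\lambda:=\max(|\lambda_2|,|\lambda_n|,|\mu_2|,|\mu_n|)$, where $\lambda_1\ge\dots\ge\lambda_n$ and $\mu_1\ge\dots\ge\mu_n$ are the eigenvalues of the simple random walk transition matrices of the subgraphs induced by $V_1$ and $V_2$. $s^{(t)}_i$ is the number of red minus the number of blue nodes in $V_i$ at time $t$. 2-Choices dynamics: in each synchronous round every node independently samples two neighbors uniformly at random with replacement and, if both have the same color, adopts it; otherwise it keeps its color. "Constant probability" means probability at least a positive constant independent of $n$ (depending only on $c_1,c_2$); asymptotic notation refers to $n\to\infty$. *)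

theory Defs
  imports "HOL-Probability.Probability" "Jordan_Normal_Form.Char_Poly"
begin

definition nbrs :: "(nat \<Rightarrow> nat \<Rightarrow> bool) \<Rightarrow> nat set \<Rightarrow> nat \<Rightarrow> nat set" where
  "nbrs E S u = {v \<in> S. E u v}"

definition connected_on :: "(nat \<Rightarrow> nat \<Rightarrow> bool) \<Rightarrow> nat set \<Rightarrow> bool" where
  "connected_on E S \<longleftrightarrow> (\<forall>u\<in>S. \<forall>v\<in>S. (\<lambda>x y. x \<in> S \<and> y \<in> S \<and> E x y)\<^sup>*\<^sup>* u v)"

definition bipartite_on :: "(nat \<Rightarrow> nat \<Rightarrow> bool) \<Rightarrow> nat set \<Rightarrow> bool" where
  "bipartite_on E S \<longleftrightarrow> (\<exists>col :: nat \<Rightarrow> bool. \<forall>u\<in>S. \<forall>v\<in>S. E u v \<longrightarrow> col u \<noteq> col v)"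

definition clustered_regular ::
  "(nat \<Rightarrow> nat \<Rightarrow> bool) \<Rightarrow> nat set \<Rightarrow> nat set \<Rightarrow> nat \<Rightarrow> nat \<Rightarrow> nat \<Rightarrow> bool" where
  "clustered_regular E V1 V2 n d b \<longleftrightarrow>
     finite V1 \<and> finite V2 \<and> V1 \<inter> V2 = {} \<and> card V1 = n \<and> card V2 = n \<and>
     (\<forall>u v. E u v \<longrightarrow> u \<in> V1 \<union> V2 \<and> v \<in> V1 \<union> V2) \<and>
     (\<forall>u v. E u v \<longleftrightarrow> E v u) \<and> (\<forall>u. \<not> E u u) \<and>
     b \<le> d \<and>
     (\<forall>u\<in>V1 \<union> V2. card (nbrs E (V1 \<union> V2) u) = d) \<and>
     (\<forall>u\<in>V1. card (nbrs E V2 u) = b) \<and> (\<forall>u\<in>V2. card (nbrs E V1 u) = b) \<and>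
     (\<forall>u\<in>V1. card (nbrs E V1 u) = d - b) \<and> (\<forall>u\<in>V2. card (nbrs E V2 u) = d - b) \<and>
     connected_on E V1 \<and> connected_on E V2 \<and>
     \<not> bipartite_on E V1 \<and> \<not> bipartite_on E V2"

definition walk_matrix :: "(nat \<Rightarrow> nat \<Rightarrow> bool) \<Rightarrow> nat set \<Rightarrow> real mat" where
  "walk_matrix E S = (let vs = sorted_list_of_set S in
     mat (card S) (card S) (\<lambda>(i,j). if E (vs ! i) (vs ! j)
        then 1 / real (card (nbrs E S (vs ! i))) else 0))"

definition eigs_desc :: "real mat \<Rightarrow> real list" where
  "eigs_desc A = rev (sorted_list_of_multiset (proots (char_poly A)))"

(* \<lambda> := max(|\<lambda>_2|, |\<lambda>_n|, |\<mu>_2|, |\<mu>_n|) *)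
definition cluster_lambda :: "(nat \<Rightarrow> nat \<Rightarrow> bool) \<Rightarrow> nat set \<Rightarrow> nat set \<Rightarrow> real" where
  "cluster_lambda E V1 V2 = (let l = eigs_desc (walk_matrix E V1); m = eigs_desc (walk_matrix E V2) in
     Max {\<bar>l ! 1\<bar>, \<bar>last l\<bar>, \<bar>m ! 1\<bar>, \<bar>last m\<bar>})"

(* configurations: True = red, False = blue; nodes outside V are fixed to False *)
type_synonym config = "nat \<Rightarrow> bool"

definition init_config :: "nat set \<Rightarrow> config pmf" where
  "init_config V = Pi_pmf V False (\<lambda>_. pmf_of_set {True, False})"

definition two_choices_step :: "(nat \<Rightarrow> nat \<Rightarrow> bool) \<Rightarrow> nat set \<Rightarrow> config \<Rightarrow> config pmf" where
  "two_choices_step E V c = Pi_pmf V False (\<lambda>u.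
     do { x \<leftarrow> pmf_of_set (nbrs E V u);
          y \<leftarrow> pmf_of_set (nbrs E V u);
          return_pmf (if c x = c y then c x else c u) })"

fun trajectory :: "(nat \<Rightarrow> nat \<Rightarrow> bool) \<Rightarrow> nat set \<Rightarrow> nat \<Rightarrow> config list pmf" where
  "trajectory E V 0 = map_pmf (\<lambda>c. [c]) (init_config V)"
| "trajectory E V (Suc t) = trajectory E V t \<bind>
     (\<lambda>cs. map_pmf (\<lambda>c'. cs @ [c']) (two_choices_step E V (last cs)))"

definition bias :: "nat set \<Rightarrow> config \<Rightarrow> int" where
  "bias S c = int (card {u \<in> S. c u}) - int (card {u \<in> S. \<not> c u})"

end

theory Submission
  imports Defs "HOL-Real_Asymp.Real_Asymp"
begin

text \<open>
  Measure the bias of each cluster in the direction of its majority colour and call it \<open>s\<close>.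
  In one round a node with colour \<open>\<sigma> = \<plusminus>1\<close> whose neighbours have average colour \<open>\<rho>\<close>
  has expected new colour \<open>\<rho> + \<sigma> (1 - \<rho>\<^sup>2) / 2\<close>. Summed over a cluster, the cross edges cost
  \<open>O(n b / d)\<close>, and the spectral bound \<open>\<lambda>\<close> of the walk inside the cluster bounds \<open>\<Sum> \<rho>\<^sup>2\<close> by
  \<open>s\<^sup>2 / n + \<lambda>\<^sup>2 n\<close>; hence the expected new bias is at least \<open>3/2 s - s\<^sup>2/n - O(\<surd>n)\<close>.
  Since the nodes update independently, Hoeffding's inequality shows that a bias \<open>s \<ge> A \<surd>n\<close> in both
  clusters (with opposite signs) becomes \<open>6/5 A \<surd>n\<close> in the next round with probability
  \<open>1 - O(1/A\<^sup>2)\<close>. The failure probabilities along \<open>A, 6/5 A, (6/5)\<^sup>2 A, \<dots>\<close> sum to \<open>O(1/A\<^sup>2)\<close>,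
  so from bias \<open>A\<^sub>0 \<surd>n\<close> the bias \<open>\<surd>n ln n\<close> is reached within \<open>log\<^bsub>6/5\<^esub> (ln n)\<close> rounds with
  probability at least \<open>1/2\<close>. Finally, by anti-concentration of the binomial distribution, the
  random initial configuration has bias \<open>A\<^sub>0 \<surd>n\<close> in \<open>V\<^sub>1\<close> and \<open>-A\<^sub>0 \<surd>n\<close> in \<open>V\<^sub>2\<close> with
  probability bounded below independently of \<open>n\<close>.
\<close>

section \<open>Rayleigh quotients of symmetric kernels\<close>

definition kernel_apply :: "('a \<Rightarrow> 'a \<Rightarrow> real) \<Rightarrow> 'a set \<Rightarrow> ('a \<Rightarrow> real) \<Rightarrow> 'a \<Rightarrow> real" where
  "kernel_apply a S x u = (\<Sum>v\<in>S. a u v * x v)"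

definition kernel_energy :: "('a \<Rightarrow> 'a \<Rightarrow> real) \<Rightarrow> 'a set \<Rightarrow> ('a \<Rightarrow> real) \<Rightarrow> real" where
  "kernel_energy a S x = (\<Sum>u\<in>S. (kernel_apply a S x u)^2)"

lemma kernel_energy_cong: "(\<And>u. u \<in> S \<Longrightarrow> x u = y u) \<Longrightarrow> kernel_energy a S x = kernel_energy a S y"
  unfolding kernel_energy_def kernel_apply_def by (intro sum.cong refl) simp

lemma kernel_apply_add_scaled:
  "kernel_apply a S (\<lambda>v. x v + t * y v) u = kernel_apply a S x u + t * kernel_apply a S y u"
  unfolding kernel_apply_def by (simp add: algebra_simps sum.distrib sum_distrib_left)

lemma kernel_apply_scaled: "kernel_apply a S (\<lambda>v. t * y v) u = t * kernel_apply a S y u"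
  unfolding kernel_apply_def by (simp add: algebra_simps sum_distrib_left)

lemma sum_kernel_apply_symmetric:
  assumes "\<And>u v. a u v = a v u"
  shows "(\<Sum>u\<in>S. kernel_apply a S x u * y u) = (\<Sum>u\<in>S. x u * kernel_apply a S y u)"
proof -
  have "(\<Sum>u\<in>S. kernel_apply a S x u * y u) = (\<Sum>u\<in>S. \<Sum>v\<in>S. a u v * x v * y u)"
    unfolding kernel_apply_def by (simp add: sum_distrib_right)
  also have "\<dots> = (\<Sum>v\<in>S. \<Sum>u\<in>S. a u v * x v * y u)" by (rule sum.swap)
  also have "\<dots> = (\<Sum>v\<in>S. x v * kernel_apply a S y v)"
    unfolding kernel_apply_def by (simp add: sum_distrib_left assms mult.commute mult.left_commute)
  finally show ?thesis .
qed

lemma compactin_unit_sphere: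
  assumes fin: "finite S"
  shows "compactin (product_topology (\<lambda>_. euclideanreal) S)
    {x \<in> topspace (product_topology (\<lambda>_. euclideanreal) S). (\<Sum>u\<in>S. (x u)^2) = 1}"
    (is "compactin ?T ?K")
proof -
  have norm: "continuous_map ?T euclideanreal (\<lambda>x. (\<Sum>u\<in>S. (x u)^2))"
    by (intro continuous_map_sum continuous_map_real_pow continuous_map_product_projection fin) auto
  have closed: "closedin ?T ?K"
    using closedin_continuous_map_preimage[OF norm, of "{1}"] by simp
  have box: "compactin ?T (PiE S (\<lambda>_. {-1..1}))"
    by (subst compactin_PiE) auto
  have sub: "?K \<subseteq> PiE S (\<lambda>_. {-1..1})"
  proof
    fix x assume x: "x \<in> ?K"
    have "\<bar>x u\<bar> \<le> 1" if "u \<in> S" for u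
    proof -
      have "(x u)^2 \<le> (\<Sum>u\<in>S. (x u)^2)"
        using that fin by (intro member_le_sum) auto
      then show ?thesis using x by (simp add: abs_square_le_1)
    qed
    then show "x \<in> PiE S (\<lambda>_. {-1..1})" using x by (auto simp: PiE_iff abs_le_iff)
  qed
  show ?thesis by (rule closed_compactin[OF box sub closed])
qed

text \<open>
  Points of the product topology are extensional functions, hence the restriction of \<open>x\<close> to \<open>S\<close>
  before comparing it with the maximiser.
\<close>

lemma kernel_energy_attains_max_on_sphere:
  assumes fin: "finite S" and ne: "S \<noteq> {}"
  shows "\<exists>w. (\<Sum>u\<in>S. (w u)^2) = 1 \<and>
    (\<forall>x. (\<Sum>u\<in>S. (x u)^2) = 1 \<longrightarrow> kernel_energy a S x \<le> kernel_energy a S w)"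
proof -
  let ?T = "product_topology (\<lambda>_. euclideanreal) S"
  let ?K = "{x \<in> topspace ?T. (\<Sum>u\<in>S. (x u)^2) = 1}"
  have "continuous_map ?T euclideanreal (kernel_energy a S)"
    unfolding kernel_energy_def kernel_apply_def
    by (intro continuous_map_sum continuous_map_real_pow continuous_map_real_mult
          continuous_map_product_projection fin) auto
  then have "compactin euclideanreal (kernel_energy a S ` ?K)"
    by (rule image_compactin[OF compactin_unit_sphere[OF fin]])
  then have compact: "compact (kernel_energy a S ` ?K)" by simp
  obtain u0 where u0: "u0 \<in> S" using ne by auto
  define e where "e = (\<lambda>u. if u \<in> S then (if u = u0 then 1 else 0) else (undefined::real))"
  have "(\<Sum>u\<in>S. (e u)^2) = (\<Sum>u\<in>S. if u = u0 then 1 else 0)"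
    by (intro sum.cong) (auto simp: e_def)
  also have "\<dots> = 1" using fin u0 by simp
  finally have "e \<in> ?K" by (auto simp: e_def PiE_iff extensional_def)
  then have "kernel_energy a S ` ?K \<noteq> {}" by auto
  from compact_attains_sup[OF compact this] obtain w where w: "w \<in> ?K"
    and max: "\<forall>t \<in> kernel_energy a S ` ?K. t \<le> kernel_energy a S w" by auto
  show ?thesis
  proof (intro exI conjI allI impI)
    show "(\<Sum>u\<in>S. (w u)^2) = 1" using w by simp
    fix x :: "'a \<Rightarrow> real" assume x: "(\<Sum>u\<in>S. (x u)^2) = 1"
    define x' where "x' = (\<lambda>u. if u \<in> S then x u else (undefined::real))"
    have "(\<Sum>u\<in>S. (x' u)^2) = (\<Sum>u\<in>S. (x u)^2)" by (intro sum.cong) (auto simp: x'_def)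
    then have "x' \<in> ?K" using x by (auto simp: x'_def PiE_iff extensional_def)
    then have "kernel_energy a S x' \<le> kernel_energy a S w" using max by auto
    moreover have "kernel_energy a S x' = kernel_energy a S x"
      by (rule kernel_energy_cong) (simp add: x'_def)
    ultimately show "kernel_energy a S x \<le> kernel_energy a S w" by simp
  qed
qed

lemma kernel_energy_le_of_sphere_bound:
  assumes fin: "finite S" and max: "\<And>x. (\<Sum>u\<in>S. (x u)^2) = 1 \<Longrightarrow> kernel_energy a S x \<le> M"
  shows "kernel_energy a S x \<le> M * (\<Sum>u\<in>S. (x u)^2)"
proof (cases "(\<Sum>u\<in>S. (x u)^2) = 0")
  case True
  then have "\<forall>u\<in>S. x u = 0" using fin by (simp add: sum_nonneg_eq_0_iff)
  then have "kernel_energy a S x = 0" unfolding kernel_energy_def kernel_apply_def by simp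
  then show ?thesis using True by simp
next
  case False
  define q where "q = (\<Sum>u\<in>S. (x u)^2)"
  have q_pos: "q > 0"
    using False unfolding q_def by (metis less_eq_real_def sum_nonneg zero_le_power2)
  define x' where "x' = (\<lambda>v. (1 / sqrt q) * x v)"
  have "(\<Sum>u\<in>S. (x' u)^2) = (\<Sum>u\<in>S. (x u)^2 / q)"
    unfolding x'_def using q_pos by (intro sum.cong) (auto simp: power_mult_distrib power_divide)
  also have "\<dots> = 1" using q_pos by (simp add: q_def[symmetric] sum_divide_distrib[symmetric])
  finally have "kernel_energy a S x' \<le> M" by (rule max)
  moreover have "kernel_energy a S x' = kernel_energy a S x / q"
    unfolding kernel_energy_def x'_def kernel_apply_scaled using q_pos
    by (simp add: power_mult_distrib power_divide sum_divide_distrib)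
  ultimately show ?thesis using q_pos by (simp add: q_def[symmetric] divide_le_eq mult.commute)
qed

lemma nonpos_quadratic_imp_linear_coeff_eq_0:
  fixes \<alpha> \<beta> :: real
  assumes all: "\<And>t. 2 * t * \<alpha> + t^2 * \<beta> \<le> 0" and "\<alpha> \<ge> 0"
  shows "\<alpha> = 0"
proof (rule ccontr)
  assume "\<alpha> \<noteq> 0"
  with \<open>\<alpha> \<ge> 0\<close> have \<alpha>_pos: "\<alpha> > 0" by simp
  define t where "t = \<alpha> / (\<bar>\<beta>\<bar> + 1)"
  have t_pos: "t > 0" using \<alpha>_pos by (simp add: t_def add_pos_nonneg)
  have "t * (\<bar>\<beta>\<bar> + 1) = \<alpha>" by (simp add: t_def)
  moreover have "t * \<beta> \<ge> - t * \<bar>\<beta>\<bar>" using t_pos mult_left_mono[of "-\<bar>\<beta>\<bar>" \<beta> t] by simp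
  ultimately have "2 * \<alpha> + t * \<beta> > 0"
    using t_pos \<alpha>_pos by (simp add: algebra_simps)
  then have "t * (2 * \<alpha> + t * \<beta>) > 0" using t_pos by simp
  moreover have "t * (2 * \<alpha> + t * \<beta>) = 2 * t * \<alpha> + t^2 * \<beta>"
    by (simp add: power2_eq_square algebra_simps)
  ultimately show False using all[of t] by simp
qed

text \<open>
  A maximiser \<open>w\<close> of \<open>\<parallel>A x\<parallel>\<^sup>2\<close> on the unit sphere is an eigenvector of \<open>A\<^sup>2\<close>: perturbing it to
  \<open>w + t z\<close> with \<open>z = A\<^sup>2 w - M w\<close> gives a quadratic in \<open>t\<close> that must stay non-positive.
\<close>

lemma symmetric_kernel_square_eigenvector:
  assumes fin: "finite S" and ne: "S \<noteq> {}" and sym: "\<And>u v. a u v = a v u"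
  shows "\<exists>w M. (\<Sum>u\<in>S. (w u)^2) = 1 \<and> M \<ge> 0 \<and>
     (\<forall>x. kernel_energy a S x \<le> M * (\<Sum>u\<in>S. (x u)^2)) \<and>
     (\<forall>u\<in>S. kernel_apply a S (kernel_apply a S w) u = M * w u)"
proof -
  obtain w where w1: "(\<Sum>u\<in>S. (w u)^2) = 1" and
    max: "\<And>x. (\<Sum>u\<in>S. (x u)^2) = 1 \<Longrightarrow> kernel_energy a S x \<le> kernel_energy a S w"
    using kernel_energy_attains_max_on_sphere[OF fin ne, of a] by blast
  define M where "M = kernel_energy a S w"
  have M_nonneg: "M \<ge> 0" unfolding M_def kernel_energy_def by (intro sum_nonneg) auto
  have bound: "kernel_energy a S x \<le> M * (\<Sum>u\<in>S. (x u)^2)" for x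
    using kernel_energy_le_of_sphere_bound[OF fin max] unfolding M_def .
  define z where "z = (\<lambda>u. kernel_apply a S (kernel_apply a S w) u - M * w u)"
  have "2 * t * (\<Sum>u\<in>S. (z u)^2) + t^2 * (kernel_energy a S z - M * (\<Sum>u\<in>S. (z u)^2)) \<le> 0" for t
  proof -
    have "kernel_energy a S (\<lambda>v. w v + t * z v) \<le> M * (\<Sum>u\<in>S. (w u + t * z u)^2)" by (rule bound)
    moreover have "kernel_energy a S (\<lambda>v. w v + t * z v) =
        M + 2 * t * (\<Sum>u\<in>S. kernel_apply a S z u * kernel_apply a S w u) + t^2 * kernel_energy a S z"
      unfolding kernel_energy_def kernel_apply_add_scaled M_def
      by (simp add: power2_sum sum.distrib sum_distrib_left power_mult_distrib algebra_simps)
    moreover have "(\<Sum>u\<in>S. (w u + t * z u)^2) =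
        1 + 2 * t * (\<Sum>u\<in>S. z u * w u) + t^2 * (\<Sum>u\<in>S. (z u)^2)"
      using w1 by (simp add: power2_sum sum.distrib sum_distrib_left power_mult_distrib algebra_simps)
    moreover have "(\<Sum>u\<in>S. kernel_apply a S z u * kernel_apply a S w u) =
        (\<Sum>u\<in>S. z u * kernel_apply a S (kernel_apply a S w) u)"
      by (rule sum_kernel_apply_symmetric[OF sym])
    moreover have "(\<Sum>u\<in>S. z u * kernel_apply a S (kernel_apply a S w) u) - M * (\<Sum>u\<in>S. z u * w u)
        = (\<Sum>u\<in>S. (z u)^2)"
      unfolding z_def
      by (simp add: power2_eq_square sum_distrib_left sum_subtractf[symmetric] algebra_simps)
    ultimately show ?thesis by (simp add: algebra_simps)
  qed
  then have "(\<Sum>u\<in>S. (z u)^2) = 0"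
    by (intro nonpos_quadratic_imp_linear_coeff_eq_0) (auto intro: sum_nonneg)
  then have "\<forall>u\<in>S. z u = 0" using fin by (simp add: sum_nonneg_eq_0_iff)
  then have "\<forall>u\<in>S. kernel_apply a S (kernel_apply a S w) u = M * w u" unfolding z_def by simp
  then show ?thesis using w1 M_nonneg bound by blast
qed

text \<open>
  If \<open>A\<^sup>2 w = M w\<close>, then \<open>A w + \<surd>M w\<close> is an eigenvector of \<open>A\<close> for \<open>\<surd>M\<close>, unless it vanishes,
  in which case \<open>w\<close> is one for \<open>-\<surd>M\<close>.
\<close>

lemma eigenvector_of_square_eigenvector:
  assumes eig2: "\<forall>u\<in>S. kernel_apply a S (kernel_apply a S w) u = M * w u"
    and "M \<ge> 0" and nonzero: "\<exists>u\<in>S. w u \<noteq> 0"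
  shows "\<exists>z \<mu>. (\<forall>u\<in>S. kernel_apply a S z u = \<mu> * z u) \<and> (\<exists>u\<in>S. z u \<noteq> 0) \<and> \<mu>^2 = M"
proof -
  let ?R = "kernel_apply a S"
  define r where "r = sqrt M"
  have rr: "r * r = M" using \<open>M \<ge> 0\<close> by (simp add: r_def)
  show ?thesis
  proof (cases "\<exists>u\<in>S. ?R w u + r * w u \<noteq> 0")
    case True
    define y where "y = (\<lambda>u. ?R w u + r * w u)"
    have "?R y u = r * y u" if "u \<in> S" for u
    proof -
      have "?R y u = ?R (?R w) u + r * ?R w u"
        unfolding y_def by (rule kernel_apply_add_scaled)
      also have "\<dots> = r * y u" using eig2 that rr by (simp add: y_def algebra_simps)
      finally show ?thesis .
    qed
    then show ?thesis using True rr by (intro exI[of _ y] exI[of _ r]) (auto simp: y_def power2_eq_square)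
  next
    case False
    then have "\<forall>u\<in>S. ?R w u = (-r) * w u" by auto
    then show ?thesis using nonzero rr by (intro exI[of _ w] exI[of _ "-r"]) (auto simp: power2_eq_square)
  qed
qed

section \<open>The random walk inside a regular cluster\<close>

locale regular_cluster =
  fixes E :: "nat \<Rightarrow> nat \<Rightarrow> bool" and S :: "nat set" and D :: nat
  assumes finite_S: "finite S" and sym_E: "\<And>u v. E u v = E v u"
    and degree: "\<And>u. u \<in> S \<Longrightarrow> card (nbrs E S u) = D" and D_pos: "D > 0"
begin

definition walk_avg :: "(nat \<Rightarrow> real) \<Rightarrow> nat \<Rightarrow> real" where
  "walk_avg x u = (\<Sum>v\<in>nbrs E S u. x v) / real D"

definition walk_kernel :: "nat \<Rightarrow> nat \<Rightarrow> real" where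
  "walk_kernel u v = (if E u v then 1 / real D else 0)"

definition centered_walk_kernel :: "nat \<Rightarrow> nat \<Rightarrow> real" where
  "centered_walk_kernel u v = walk_kernel u v - 1 / real (card S)"

lemma walk_kernel_sym: "walk_kernel u v = walk_kernel v u"
  unfolding walk_kernel_def using sym_E by simp

lemma centered_walk_kernel_sym: "centered_walk_kernel u v = centered_walk_kernel v u"
  unfolding centered_walk_kernel_def using walk_kernel_sym by simp

lemma walk_avg_eq_kernel_apply: "walk_avg x u = kernel_apply walk_kernel S x u"
proof -
  have "(\<Sum>v\<in>nbrs E S u. x v) = (\<Sum>v\<in>S. if E u v then x v else 0)"
    unfolding nbrs_def using finite_S by (simp add: sum.inter_filter)
  moreover have "kernel_apply walk_kernel S x u = (\<Sum>v\<in>S. if E u v then x v else 0) / real D"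
    unfolding kernel_apply_def walk_kernel_def sum_divide_distrib by (intro sum.cong refl) auto
  ultimately show ?thesis unfolding walk_avg_def by simp
qed

lemma walk_avg_const_1: "u \<in> S \<Longrightarrow> walk_avg (\<lambda>_. 1) u = 1"
  unfolding walk_avg_def using degree D_pos by simp

lemma sum_walk_avg: "(\<Sum>u\<in>S. walk_avg x u) = (\<Sum>u\<in>S. x u)"
proof -
  have "(\<Sum>u\<in>S. walk_avg x u) = (\<Sum>u\<in>S. kernel_apply walk_kernel S x u * 1)"
    by (simp add: walk_avg_eq_kernel_apply)
  also have "\<dots> = (\<Sum>u\<in>S. x u * kernel_apply walk_kernel S (\<lambda>_. 1) u)"
    by (rule sum_kernel_apply_symmetric[OF walk_kernel_sym])
  also have "\<dots> = (\<Sum>u\<in>S. x u)"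
    by (intro sum.cong refl) (simp add: walk_avg_const_1 walk_avg_eq_kernel_apply[symmetric])
  finally show ?thesis .
qed

lemma kernel_apply_centered:
  "kernel_apply centered_walk_kernel S x u = walk_avg x u - (\<Sum>v\<in>S. x v) / real (card S)"
  unfolding walk_avg_eq_kernel_apply kernel_apply_def centered_walk_kernel_def
  by (simp add: algebra_simps sum_subtractf sum_divide_distrib)

lemma sum_kernel_apply_centered: "(\<Sum>u\<in>S. kernel_apply centered_walk_kernel S x u) = 0"
  using finite_S
  by (cases "S = {}") (simp_all add: kernel_apply_centered sum_subtractf sum_walk_avg)

lemma sum_sq_walk_avg_eq:
  "(\<Sum>u\<in>S. (walk_avg x u)^2) = kernel_energy centered_walk_kernel S x + (\<Sum>u\<in>S. x u)^2 / real (card S)"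
proof -
  define m where "m = (\<Sum>v\<in>S. x v) / real (card S)"
  have "(\<Sum>u\<in>S. (walk_avg x u)^2) = (\<Sum>u\<in>S. (kernel_apply centered_walk_kernel S x u + m)^2)"
    by (simp add: kernel_apply_centered m_def)
  also have "\<dots> = kernel_energy centered_walk_kernel S x
      + 2 * m * (\<Sum>u\<in>S. kernel_apply centered_walk_kernel S x u) + real (card S) * m^2"
    unfolding kernel_energy_def by (simp add: power2_sum sum.distrib sum_distrib_left algebra_simps)
  also have "\<dots> = kernel_energy centered_walk_kernel S x + (\<Sum>u\<in>S. x u)^2 / real (card S)"
    using finite_S by (cases "S = {}") (simp_all add: sum_kernel_apply_centered m_def power2_eq_square)
  finally show ?thesis .
qed

text \<open>
  The centered kernel \<open>R\<close> maps into the functions of sum zero, on which it agrees with the walk.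
  So an eigenvector of \<open>R\<close> for \<open>\<plusminus>\<surd>M\<close>, where \<open>M\<close> is the largest eigenvalue of \<open>R\<^sup>2\<close>, is an
  eigenvector of the walk orthogonal to the constants.
\<close>

lemma sum_sq_walk_avg_le:
  assumes ne: "S \<noteq> {}" and "\<Lambda> \<ge> 0"
    and eig: "\<And>z \<mu>. \<forall>u\<in>S. walk_avg z u = \<mu> * z u \<Longrightarrow> (\<Sum>u\<in>S. z u) = 0 \<Longrightarrow> \<exists>u\<in>S. z u \<noteq> 0
       \<Longrightarrow> \<bar>\<mu>\<bar> \<le> \<Lambda>"
  shows "(\<Sum>u\<in>S. (walk_avg x u)^2) \<le> (\<Sum>u\<in>S. x u)^2 / real (card S) + \<Lambda>^2 * (\<Sum>u\<in>S. (x u)^2)"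
proof -
  let ?R = "kernel_apply centered_walk_kernel S"
  obtain w M where w1: "(\<Sum>u\<in>S. (w u)^2) = 1" and "M \<ge> 0"
    and bound: "\<And>x. kernel_energy centered_walk_kernel S x \<le> M * (\<Sum>u\<in>S. (x u)^2)"
    and eigw: "\<And>u. u \<in> S \<Longrightarrow> ?R (?R w) u = M * w u"
    using symmetric_kernel_square_eigenvector[of S centered_walk_kernel,
        OF finite_S ne centered_walk_kernel_sym] by blast
  have "M \<le> \<Lambda>^2"
  proof (cases "M = 0")
    case True then show ?thesis by simp
  next
    case False
    have "\<exists>u\<in>S. w u \<noteq> 0"
    proof (rule ccontr)
      assume "\<not> (\<exists>u\<in>S. w u \<noteq> 0)"
      then have "(\<Sum>u\<in>S. (w u)^2) = 0" by simp
      then show False using w1 by simp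
    qed
    then have "\<exists>z \<mu>. (\<forall>u\<in>S. ?R z u = \<mu> * z u) \<and> (\<exists>u\<in>S. z u \<noteq> 0) \<and> \<mu>^2 = M"
      using eigw \<open>M \<ge> 0\<close> by (intro eigenvector_of_square_eigenvector) auto
    then obtain z \<mu> where z: "\<forall>u\<in>S. ?R z u = \<mu> * z u" and z_nonzero: "\<exists>u\<in>S. z u \<noteq> 0"
      and \<mu>2: "\<mu>^2 = M" by blast
    have "\<mu> \<noteq> 0" using \<mu>2 False by auto
    moreover have "\<mu> * (\<Sum>u\<in>S. z u) = (\<Sum>u\<in>S. ?R z u)"
      using z by (simp add: sum_distrib_left)
    ultimately have sum_z: "(\<Sum>u\<in>S. z u) = 0" by (simp add: sum_kernel_apply_centered)
    then have "\<forall>u\<in>S. walk_avg z u = \<mu> * z u" using z by (simp add: kernel_apply_centered)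
    then have "\<bar>\<mu>\<bar> \<le> \<Lambda>" using eig sum_z z_nonzero by blast
    then have "\<bar>\<mu>\<bar>^2 \<le> \<Lambda>^2" by (intro power_mono) auto
    then show ?thesis using \<mu>2 by (simp add: power2_abs)
  qed
  then have "kernel_energy centered_walk_kernel S x \<le> \<Lambda>^2 * (\<Sum>u\<in>S. (x u)^2)"
    using bound[of x] by (meson mult_right_mono order.trans sum_nonneg zero_le_power2)
  then show ?thesis by (simp add: sum_sq_walk_avg_eq)
qed

end

lemma sorted_bounds_below_max:
  fixes L :: "real list"
  assumes sorted: "sorted L" and "x \<in> set L" "y \<in> set L" "x < y"
  shows "last (rev L) \<le> x \<and> x \<le> rev L ! 1"
proof -
  obtain j where j: "j < length L" "L ! j = x" using \<open>x \<in> set L\<close> by (auto simp: in_set_conv_nth)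
  obtain k where k: "k < length L" "L ! k = y" using \<open>y \<in> set L\<close> by (auto simp: in_set_conv_nth)
  have "j < k"
    using sorted_nth_mono[OF sorted, of k j] j k \<open>x < y\<close> by (metis linorder_not_le not_le_imp_less)
  then have "rev L ! 1 = L ! (length L - 2)" using k by (simp add: rev_nth numeral_2_eq_2)
  moreover have "L ! j \<le> L ! (length L - 2)" using \<open>j < k\<close> k by (intro sorted_nth_mono[OF sorted]) auto
  moreover have "last (rev L) = L ! 0" using j by (cases L) (simp_all add: last_rev)
  moreover have "L ! 0 \<le> L ! j" using j by (intro sorted_nth_mono[OF sorted]) auto
  ultimately show ?thesis using j by simp
qed

definition walk_lambda :: "(nat \<Rightarrow> nat \<Rightarrow> bool) \<Rightarrow> nat set \<Rightarrow> real" where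
  "walk_lambda E S = (let l = eigs_desc (walk_matrix E S) in max \<bar>l ! 1\<bar> \<bar>last l\<bar>)"

lemma cluster_lambda_eq_max: "cluster_lambda E V1 V2 = max (walk_lambda E V1) (walk_lambda E V2)"
  by (simp add: cluster_lambda_def walk_lambda_def Let_def max.assoc)

lemma walk_lambda_nonneg: "walk_lambda E S \<ge> 0"
  by (simp add: walk_lambda_def Let_def le_max_iff_disj)

lemma abs_eigs_desc_le_walk_lambda:
  assumes "(1::real) \<in> set (eigs_desc (walk_matrix E S))" "\<mu> \<in> set (eigs_desc (walk_matrix E S))" "\<mu> < 1"
  shows "\<bar>\<mu>\<bar> \<le> walk_lambda E S"
proof -
  let ?L = "sorted_list_of_multiset (proots (char_poly (walk_matrix E S)))"
  have "last (rev ?L) \<le> \<mu> \<and> \<mu> \<le> rev ?L ! 1"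
    using sorted_bounds_below_max[of ?L \<mu> 1] assms by (simp add: eigs_desc_def)
  then show ?thesis unfolding walk_lambda_def eigs_desc_def Let_def by linarith
qed

context regular_cluster
begin

lemma walk_matrix_mult_vec:
  assumes i: "i < card S"
  shows "(walk_matrix E S *\<^sub>v vec (card S) (\<lambda>j. z (sorted_list_of_set S ! j))) $ i
    = walk_avg z (sorted_list_of_set S ! i)"
proof -
  define vs where "vs = sorted_list_of_set S"
  define n where "n = card S"
  have set_vs: "set vs = S" and len_vs: "length vs = n" and "distinct vs"
    using finite_S by (auto simp: vs_def n_def)
  then have bij: "bij_betw ((!) vs) {..<n} S" by (intro bij_betw_nth) auto
  have "vs ! i \<in> S" using i set_vs len_vs by (auto simp: n_def)
  then have "walk_matrix E S $$ (i, j) = walk_kernel (vs ! i) (vs ! j)" if "j < n" for j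
    using i that by (simp add: walk_matrix_def Let_def vs_def[symmetric] n_def[symmetric]
        degree walk_kernel_def)
  then have "(walk_matrix E S *\<^sub>v vec n (\<lambda>j. z (vs ! j))) $ i
      = (\<Sum>j\<in>{..<n}. walk_kernel (vs ! i) (vs ! j) * z (vs ! j))"
    using i by (auto simp: walk_matrix_def Let_def scalar_prod_def n_def[symmetric] lessThan_atLeast0
        intro!: sum.cong)
  also have "\<dots> = (\<Sum>w\<in>S. walk_kernel (vs ! i) w * z w)"
    by (rule sum.reindex_bij_betw[OF bij, of "\<lambda>w. walk_kernel (vs ! i) w * z w"])
  also have "\<dots> = walk_avg z (vs ! i)" by (simp add: walk_avg_eq_kernel_apply kernel_apply_def)
  finally show ?thesis unfolding vs_def n_def .
qed

lemma walk_eigenvalue_in_eigs_desc: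
  assumes eig: "\<forall>u\<in>S. walk_avg z u = \<mu> * z u" and nonzero: "\<exists>u\<in>S. z u \<noteq> 0"
  shows "\<mu> \<in> set (eigs_desc (walk_matrix E S))"
proof -
  define vs where "vs = sorted_list_of_set S"
  define n where "n = card S"
  define A where "A = walk_matrix E S"
  have set_vs: "set vs = S" and len_vs: "length vs = n"
    using finite_S by (auto simp: vs_def n_def)
  have A: "A \<in> carrier_mat n n" by (simp add: A_def walk_matrix_def Let_def n_def)
  define v where "v = vec n (\<lambda>i. z (vs ! i))"
  have "A *\<^sub>v v = \<mu> \<cdot>\<^sub>v v"
  proof (rule eq_vecI)
    fix i assume "i < dim_vec (\<mu> \<cdot>\<^sub>v v)"
    then have i: "i < n" by (simp add: v_def)
    then have "(A *\<^sub>v v) $ i = walk_avg z (vs ! i)"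
      unfolding A_def v_def vs_def n_def by (rule walk_matrix_mult_vec[unfolded n_def])
    also have "\<dots> = \<mu> * z (vs ! i)" using eig i set_vs len_vs by auto
    finally show "(A *\<^sub>v v) $ i = (\<mu> \<cdot>\<^sub>v v) $ i" using i by (simp add: v_def)
  qed (use A in \<open>simp add: v_def\<close>)
  moreover have "v \<noteq> 0\<^sub>v n"
  proof
    assume v0: "v = 0\<^sub>v n"
    obtain u where u: "u \<in> S" "z u \<noteq> 0" using nonzero by auto
    then obtain i where i: "i < n" "vs ! i = u" using set_vs len_vs by (auto simp: in_set_conv_nth)
    have "v $ i = 0" using v0 i by simp
    then show False using i u by (simp add: v_def)
  qed
  ultimately have "eigenvector A v \<mu>" unfolding eigenvector_def using A by (auto simp: v_def)
  then have "eigenvalue A \<mu>" unfolding eigenvalue_def by blast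
  then have "poly (char_poly A) \<mu> = 0" using eigenvalue_root_char_poly[OF A] by simp
  moreover have "char_poly A \<noteq> 0" using degree_monic_char_poly[OF A] by auto
  ultimately show ?thesis by (simp add: eigs_desc_def A_def)
qed

text \<open>Maximum principle: a harmonic function attains its maximum on a whole connected component.\<close>

lemma harmonic_sum_zero_imp_zero:
  assumes conn: "connected_on E S" and harmonic: "\<forall>u\<in>S. walk_avg z u = z u"
    and sum_z: "(\<Sum>u\<in>S. z u) = 0"
  shows "\<forall>u\<in>S. z u = 0"
proof (cases "S = {}")
  case False
  define m where "m = Max (z ` S)"
  have "m \<in> z ` S" unfolding m_def using finite_S False by simp
  then obtain u0 where u0: "u0 \<in> S" "z u0 = m" by auto
  have le_m: "z v \<le> m" if "v \<in> S" for v unfolding m_def using finite_S that by simp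
  have max_step: "z v = m" if "z u = m" "u \<in> S" "v \<in> S" "E u v" for u v
  proof -
    have fin: "finite (nbrs E S u)" using finite_S by (simp add: nbrs_def)
    have "(\<Sum>w\<in>nbrs E S u. z w) = real D * z u"
      using harmonic that(2) D_pos by (simp add: walk_avg_def field_simps)
    then have "(\<Sum>w\<in>nbrs E S u. m - z w) = 0"
      using that(1,2) degree by (simp add: sum_subtractf)
    moreover have "\<forall>w\<in>nbrs E S u. m - z w \<ge> 0" using le_m by (auto simp: nbrs_def)
    ultimately have "\<forall>w\<in>nbrs E S u. m - z w = 0" using fin by (simp add: sum_nonneg_eq_0_iff)
    moreover have "v \<in> nbrs E S u" using that by (simp add: nbrs_def)
    ultimately show ?thesis by simp
  qed
  have all_m: "z v = m" if v: "v \<in> S" for v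
  proof -
    have "(\<lambda>x y. x \<in> S \<and> y \<in> S \<and> E x y)\<^sup>*\<^sup>* u0 v"
      using conn u0 v unfolding connected_on_def by blast
    then show ?thesis
    proof (induction rule: rtranclp_induct)
      case base then show ?case using u0 by simp
    next
      case (step y w) then show ?case using max_step[of y w] by blast
    qed
  qed
  then have "real (card S) * m = 0" using sum_z by simp
  then have "m = 0" using finite_S False by simp
  then show ?thesis using all_m by simp
qed simp

lemma abs_walk_eigenvalue_le_1:
  assumes eig: "\<forall>u\<in>S. walk_avg z u = \<mu> * z u" and nonzero: "\<exists>u\<in>S. z u \<noteq> 0"
  shows "\<bar>\<mu>\<bar> \<le> 1"
proof -
  define m where "m = Max ((\<lambda>u. \<bar>z u\<bar>) ` S)"
  have "m \<in> (\<lambda>u. \<bar>z u\<bar>) ` S" unfolding m_def using finite_S nonzero by (intro Max_in) auto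
  then obtain u0 where u0: "u0 \<in> S" "\<bar>z u0\<bar> = m" by auto
  have le_m: "\<bar>z v\<bar> \<le> m" if "v \<in> S" for v unfolding m_def using finite_S that by simp
  have "m > 0" using nonzero le_m by force
  have "\<bar>\<Sum>w\<in>nbrs E S u0. z w\<bar> \<le> (\<Sum>w\<in>nbrs E S u0. \<bar>z w\<bar>)" by (rule sum_abs)
  also have "\<dots> \<le> (\<Sum>w\<in>nbrs E S u0. m)" by (intro sum_mono) (auto simp: nbrs_def le_m)
  also have "\<dots> = real D * m" using degree u0 by simp
  finally have "\<bar>walk_avg z u0\<bar> \<le> m" using D_pos by (simp add: walk_avg_def divide_le_eq mult.commute)
  then have "\<bar>\<mu>\<bar> * m \<le> m" using eig u0 by (simp add: abs_mult)
  then show ?thesis using \<open>m > 0\<close> by simp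
qed

lemma abs_walk_eigenvalue_le_walk_lambda:
  assumes conn: "connected_on E S" and eig: "\<forall>u\<in>S. walk_avg z u = \<mu> * z u"
    and "(\<Sum>u\<in>S. z u) = 0" and nonzero: "\<exists>u\<in>S. z u \<noteq> 0"
  shows "\<bar>\<mu>\<bar> \<le> walk_lambda E S"
proof -
  have "\<mu> \<noteq> 1"
    using harmonic_sum_zero_imp_zero[OF conn _ \<open>(\<Sum>u\<in>S. z u) = 0\<close>] eig nonzero by auto
  moreover have "\<bar>\<mu>\<bar> \<le> 1" by (rule abs_walk_eigenvalue_le_1[OF eig nonzero])
  moreover have "(1::real) \<in> set (eigs_desc (walk_matrix E S))"
    using walk_eigenvalue_in_eigs_desc[of "\<lambda>_. 1" 1] walk_avg_const_1 nonzero by auto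
  ultimately show ?thesis
    using abs_eigs_desc_le_walk_lambda walk_eigenvalue_in_eigs_desc[OF eig nonzero] by force
qed

lemma sum_sq_walk_avg_le_walk_lambda:
  assumes "connected_on E S" and "S \<noteq> {}"
  shows "(\<Sum>u\<in>S. (walk_avg x u)^2)
    \<le> (\<Sum>u\<in>S. x u)^2 / real (card S) + (walk_lambda E S)^2 * (\<Sum>u\<in>S. (x u)^2)"
  using sum_sq_walk_avg_le[OF \<open>S \<noteq> {}\<close> walk_lambda_nonneg]
    abs_walk_eigenvalue_le_walk_lambda[OF \<open>connected_on E S\<close>] by blast

end

section \<open>One round of 2-Choices\<close>

lemma Pi_pmf_sum_lower_tail:
  fixes h :: "'b \<Rightarrow> real"
  assumes finV: "finite V" and SV: "S \<subseteq> V" and ne: "S \<noteq> {}"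
    and h_range: "\<And>x. h x \<in> {-1..1}" and eps: "\<epsilon> \<ge> 0"
  shows "measure_pmf.prob (Pi_pmf V dflt K)
           {c. (\<Sum>u\<in>S. h (c u)) \<le> (\<Sum>u\<in>S. measure_pmf.expectation (K u) h) - \<epsilon>}
         \<le> exp (- (\<epsilon>^2) / (2 * real (card S)))"
proof -
  let ?P = "Pi_pmf V dflt K"
  have finS: "finite S" using finV SV finite_subset by blast
  have ind0: "prob_space.indep_vars (measure_pmf ?P) (\<lambda>_. count_space UNIV) (\<lambda>x f. f x) S"
    using prob_space.indep_vars_subset[OF measure_pmf.prob_space_axioms indep_vars_Pi_pmf[OF finV] SV] .
  have ind: "prob_space.indep_vars (measure_pmf ?P) (\<lambda>_. borel) (\<lambda>u c. h (c u)) S"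
    by (intro prob_space.indep_vars_compose2[OF measure_pmf.prob_space_axioms ind0]) auto
  interpret H: Hoeffding_ineq "measure_pmf ?P" S "\<lambda>u c. h (c u)" "\<lambda>_. -1" "\<lambda>_. 1"
     "\<Sum>u\<in>S. measure_pmf.expectation ?P (\<lambda>c. h (c u))"
    by unfold_locales (use finS ind h_range in \<open>auto simp: measure_pmf.prob_space_axioms\<close>)
  have expectation_component:
    "measure_pmf.expectation ?P (\<lambda>c. h (c u)) = measure_pmf.expectation (K u) h" if "u \<in> S" for u
  proof -
    have "measure_pmf.expectation ?P (\<lambda>c. h (c u)) = measure_pmf.expectation (map_pmf (\<lambda>c. c u) ?P) h"
      by simp
    also have "map_pmf (\<lambda>c. c u) ?P = K u" using that SV finV by (subst Pi_pmf_component) auto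
    finally show ?thesis .
  qed
  have "(\<Sum>u\<in>S. ((1::real) - (-1))^2) = 4 * real (card S)" by simp
  moreover have "card S > 0" using finS ne by (simp add: card_gt_0_iff)
  ultimately have "measure_pmf.prob ?P {x \<in> space (measure_pmf ?P).
      (\<Sum>u\<in>S. h (x u)) \<le> (\<Sum>u\<in>S. measure_pmf.expectation ?P (\<lambda>c. h (c u))) - \<epsilon>}
      \<le> exp (-2 * \<epsilon>\<^sup>2 / (4 * real (card S)))"
    using H.Hoeffding_ineq_le[OF eps] by simp
  moreover have "-2 * \<epsilon>\<^sup>2 / (4 * real (card S)) = - (\<epsilon>^2) / (2 * real (card S))" by simp
  moreover have "(\<Sum>u\<in>S. measure_pmf.expectation ?P (\<lambda>c. h (c u))) = (\<Sum>u\<in>S. measure_pmf.expectation (K u) h)"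
    using expectation_component by simp
  ultimately show ?thesis by simp
qed

definition spin :: "bool \<Rightarrow> real" where
  "spin x = (if x then 1 else -1)"

lemma expectation_pmf_of_set_pair:
  fixes h :: "'b \<Rightarrow> real"
  assumes fin: "finite N" and ne: "N \<noteq> {}"
  shows "measure_pmf.expectation (do { x \<leftarrow> pmf_of_set N; y \<leftarrow> pmf_of_set N; return_pmf (g x y) }) h
    = (\<Sum>x\<in>N. \<Sum>y\<in>N. h (g x y)) / real (card N)^2"
proof -
  define k where "k = real (card N)"
  have inner: "measure_pmf.expectation (pmf_of_set N \<bind> (\<lambda>y. return_pmf (g x y))) h
      = (\<Sum>y\<in>N. h (g x y) /\<^sub>R k)" for x
    using fin ne by (subst pmf_expectation_bind_pmf_of_set) (auto simp: k_def simp del: scaleR_conv_of_real)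
  have "measure_pmf.expectation (do { x \<leftarrow> pmf_of_set N; y \<leftarrow> pmf_of_set N; return_pmf (g x y) }) h
      = (\<Sum>x\<in>N. measure_pmf.expectation (pmf_of_set N \<bind> (\<lambda>y. return_pmf (g x y))) h /\<^sub>R k)"
    unfolding k_def by (rule pmf_expectation_bind_pmf_of_set) (use fin ne in auto)
  also have "\<dots> = (\<Sum>x\<in>N. (\<Sum>y\<in>N. h (g x y) /\<^sub>R k) /\<^sub>R k)"
    by (simp only: inner)
  also have "\<dots> = (\<Sum>x\<in>N. (\<Sum>y\<in>N. h (g x y) / k) / k)"
    by (simp add: divide_inverse mult.commute)
  also have "\<dots> = (\<Sum>x\<in>N. \<Sum>y\<in>N. h (g x y)) / k^2"
    by (simp add: sum_divide_distrib power2_eq_square)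
  finally show ?thesis unfolding k_def .
qed

text \<open>
  With \<open>a\<^sub>x = \<tau> spin (c x)\<close> and \<open>\<sigma> = \<tau> spin cu\<close>, the vote of the pair \<open>(x, y)\<close> is
  \<open>(a\<^sub>x + a\<^sub>y)/2 + \<sigma> (1 - a\<^sub>x a\<^sub>y)/2\<close>, which is bilinear in the two independent samples.
\<close>

lemma expectation_two_choices_vote:
  fixes N :: "'a set" and c :: "'a \<Rightarrow> bool" and \<tau> :: real
  assumes fin: "finite N" and ne: "N \<noteq> {}" and tau: "\<tau> = 1 \<or> \<tau> = -1"
  defines "\<rho> \<equiv> (\<Sum>v\<in>N. \<tau> * spin (c v)) / real (card N)"
  shows "measure_pmf.expectation
           (do { x \<leftarrow> pmf_of_set N; y \<leftarrow> pmf_of_set N; return_pmf (if c x = c y then c x else cu) })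
           (\<lambda>x. \<tau> * spin x)
         = \<rho> + \<tau> * spin cu * (1 - \<rho>^2) / 2"
proof -
  define k where "k = real (card N)"
  have k_pos: "k > 0" using fin ne by (simp add: k_def card_gt_0_iff)
  define a where "a = (\<lambda>v. \<tau> * spin (c v))"
  define \<sigma> where "\<sigma> = \<tau> * spin cu"
  define A where "A = (\<Sum>v\<in>N. a v)"
  have vote: "\<tau> * spin (if c x = c y then c x else cu) = (a x + a y) / 2 + \<sigma> * (1 - a x * a y) / 2" for x y
    using tau by (cases "c x"; cases "c y"; cases cu) (auto simp: a_def \<sigma>_def spin_def)
  have "measure_pmf.expectation
          (do { x \<leftarrow> pmf_of_set N; y \<leftarrow> pmf_of_set N; return_pmf (if c x = c y then c x else cu) })
          (\<lambda>x. \<tau> * spin x)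
      = (\<Sum>x\<in>N. \<Sum>y\<in>N. (a x + a y) / 2 + \<sigma> * (1 - a x * a y) / 2) / k^2"
    by (simp only: expectation_pmf_of_set_pair[OF fin ne] vote k_def)
  also have "(\<Sum>x\<in>N. \<Sum>y\<in>N. (a x + a y) / 2 + \<sigma> * (1 - a x * a y) / 2)
      = (\<Sum>x\<in>N. (k / 2) * a x + (A / 2 + \<sigma> * k / 2) - (\<sigma> * A / 2) * a x)"
  proof (intro sum.cong refl)
    fix x
    have "(\<Sum>y\<in>N. (a x + a y) / 2 + \<sigma> * (1 - a x * a y) / 2)
        = (\<Sum>y\<in>N. (a x / 2 + \<sigma> / 2) + (1/2 - \<sigma> * a x / 2) * a y)"
      by (intro sum.cong refl) (simp add: field_simps)
    also have "\<dots> = k * (a x / 2 + \<sigma> / 2) + (1/2 - \<sigma> * a x / 2) * A"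
      by (simp add: sum.distrib sum_distrib_left[symmetric] A_def k_def)
    finally show "(\<Sum>y\<in>N. (a x + a y) / 2 + \<sigma> * (1 - a x * a y) / 2)
        = (k / 2) * a x + (A / 2 + \<sigma> * k / 2) - (\<sigma> * A / 2) * a x"
      by (simp add: algebra_simps)
  qed
  also have "\<dots> = (k / 2) * A + k * (A / 2 + \<sigma> * k / 2) - (\<sigma> * A / 2) * A"
    by (simp only: sum.distrib sum_subtractf sum_distrib_left[symmetric] sum_constant A_def k_def
        distrib_left)
  also have "\<dots> / k^2 = A / k + \<sigma> * (1 - (A / k)^2) / 2"
    using k_pos by (simp add: field_simps power2_eq_square)
  finally show ?thesis by (simp add: \<rho>_def A_def a_def k_def \<sigma>_def)
qed

lemma abs_sum_le_card:
  assumes "\<And>v. \<bar>f v\<bar> \<le> 1"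
  shows "\<bar>\<Sum>v\<in>A. f v\<bar> \<le> real (card A)"
proof -
  have "\<bar>\<Sum>v\<in>A. f v\<bar> \<le> (\<Sum>v\<in>A. \<bar>f v\<bar>)" by (rule sum_abs)
  also have "\<dots> \<le> (\<Sum>v\<in>A. 1)" using assms by (intro sum_mono)
  finally show ?thesis by simp
qed

lemma square_sum_le: "(x + y)^2 \<le> 2 * x^2 + 2 * (y::real)^2"
  using zero_le_power2[of "x - y"] by (simp add: power2_eq_square algebra_simps)

text \<open>
  The nodes of \<open>T\<close> are constrained only through their \<open>b\<close> neighbours in \<open>S\<close>, so the locale applies
  with the two clusters in either order.
\<close>

locale cluster_pair =
  fixes E :: "nat \<Rightarrow> nat \<Rightarrow> bool" and V S T :: "nat set" and n d b D :: nat
  assumes finite_S: "finite S" and finite_T: "finite T" and disjoint: "S \<inter> T = {}"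
    and V_eq: "V = S \<union> T" and card_S: "card S = n" and card_T: "card T = n"
    and sym_E: "\<And>u v. E u v = E v u"
    and degree_S: "\<And>u. u \<in> S \<Longrightarrow> card (nbrs E S u) = D"
    and cross_S: "\<And>u. u \<in> S \<Longrightarrow> card (nbrs E T u) = b"
    and cross_T: "\<And>u. u \<in> T \<Longrightarrow> card (nbrs E S u) = b"
    and d_eq: "d = D + b" and D_pos: "D > 0" and n_pos: "n > 0"
begin

sublocale regular_cluster E S D
  using finite_S sym_E degree_S D_pos by unfold_locales auto

lemma finite_V: "finite V" using finite_S finite_T V_eq by simp

lemma nbrs_V_split: "nbrs E V u = nbrs E S u \<union> nbrs E T u" "nbrs E S u \<inter> nbrs E T u = {}"
  using V_eq disjoint by (auto simp: nbrs_def)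

lemma finite_nbrs: "X = S \<or> X = T \<or> X = V \<Longrightarrow> finite (nbrs E X u)"
  using finite_S finite_T finite_V by (auto simp: nbrs_def)

lemma card_nbrs_V: "u \<in> S \<Longrightarrow> card (nbrs E V u) = d"
  using nbrs_V_split[of u] degree_S cross_S d_eq finite_nbrs by (simp add: card_Un_disjoint)

lemma d_pos: "d > 0" using d_eq D_pos by simp

lemma S_nonempty: "S \<noteq> {}" using card_S n_pos by auto

definition nbr_avg :: "(nat \<Rightarrow> real) \<Rightarrow> nat \<Rightarrow> real" where
  "nbr_avg f u = (\<Sum>v\<in>nbrs E V u. f v) / real d"

lemma sum_nbr_avg:
  "(\<Sum>u\<in>S. nbr_avg f u) = (real D * (\<Sum>v\<in>S. f v) + real b * (\<Sum>v\<in>T. f v)) / real d"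
proof -
  have "(\<Sum>u\<in>S. \<Sum>v\<in>nbrs E V u. f v) = (\<Sum>u\<in>S. \<Sum>v\<in>V. if E u v then f v else 0)"
    unfolding nbrs_def by (intro sum.cong refl sum.inter_filter[OF finite_V])
  also have "\<dots> = (\<Sum>v\<in>V. \<Sum>u\<in>S. if E u v then f v else 0)" by (rule sum.swap)
  also have "\<dots> = (\<Sum>v\<in>V. f v * real (card (nbrs E S v)))"
  proof (intro sum.cong refl)
    fix v
    have "(\<Sum>u\<in>S. if E u v then f v else 0) = (\<Sum>u\<in>{u\<in>S. E u v}. f v)"
      by (rule sum.inter_filter[OF finite_S, symmetric])
    also have "{u\<in>S. E u v} = nbrs E S v" using sym_E by (auto simp: nbrs_def)
    finally show "(\<Sum>u\<in>S. if E u v then f v else 0) = f v * real (card (nbrs E S v))" by simp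
  qed
  also have "\<dots> = (\<Sum>v\<in>S. f v * real (card (nbrs E S v))) + (\<Sum>v\<in>T. f v * real (card (nbrs E S v)))"
    using V_eq disjoint finite_S finite_T by (simp add: sum.union_disjoint)
  also have "\<dots> = real D * (\<Sum>v\<in>S. f v) + real b * (\<Sum>v\<in>T. f v)"
  proof -
    have "(\<Sum>v\<in>S. f v * real (card (nbrs E S v))) = (\<Sum>v\<in>S. real D * f v)"
      by (intro sum.cong refl) (simp add: degree_S)
    moreover have "(\<Sum>v\<in>T. f v * real (card (nbrs E S v))) = (\<Sum>v\<in>T. real b * f v)"
      by (intro sum.cong refl) (simp add: cross_T)
    ultimately show ?thesis by (simp add: sum_distrib_left)
  qed
  finally show ?thesis unfolding nbr_avg_def by (simp add: sum_divide_distrib[symmetric])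
qed

lemma nbr_avg_split:
  assumes "u \<in> S" and f_bound: "\<And>v. \<bar>f v\<bar> \<le> 1"
  shows "\<exists>e. nbr_avg f u = real D / real d * walk_avg f u + e \<and> \<bar>e\<bar> \<le> real b / real d"
proof -
  define e where "e = (\<Sum>v\<in>nbrs E T u. f v) / real d"
  have "(\<Sum>v\<in>nbrs E V u. f v) = (\<Sum>v\<in>nbrs E S u. f v) + (\<Sum>v\<in>nbrs E T u. f v)"
    using nbrs_V_split[of u] finite_nbrs by (simp add: sum.union_disjoint)
  then have "nbr_avg f u = real D / real d * walk_avg f u + e"
    unfolding nbr_avg_def walk_avg_def e_def using D_pos by (simp add: add_divide_distrib)
  moreover have "\<bar>\<Sum>v\<in>nbrs E T u. f v\<bar> \<le> real b"
  proof -
    have "\<bar>\<Sum>v\<in>nbrs E T u. f v\<bar> \<le> (\<Sum>v\<in>nbrs E T u. \<bar>f v\<bar>)" by (rule sum_abs)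
    also have "\<dots> \<le> (\<Sum>v\<in>nbrs E T u. 1)" by (intro sum_mono f_bound)
    finally show ?thesis using cross_S[OF \<open>u \<in> S\<close>] by simp
  qed
  then have "\<bar>e\<bar> \<le> real b / real d" using d_pos by (simp add: e_def divide_right_mono)
  ultimately show ?thesis by blast
qed

lemma sum_sq_nbr_avg_le:
  assumes f_bound: "\<And>v. \<bar>f v\<bar> \<le> 1"
  shows "(\<Sum>u\<in>S. (nbr_avg f u)^2) \<le> 2 * (\<Sum>u\<in>S. (walk_avg f u)^2) + 2 * real n * (real b / real d)^2"
proof -
  have "(nbr_avg f u)^2 \<le> 2 * (walk_avg f u)^2 + 2 * (real b / real d)^2" if u: "u \<in> S" for u
  proof -
    obtain e where e: "nbr_avg f u = real D / real d * walk_avg f u + e" "\<bar>e\<bar> \<le> real b / real d"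
      using nbr_avg_split[of u f, OF u f_bound] by blast
    define q where "q = real D / real d"
    have "0 \<le> q" "q \<le> 1" using d_eq d_pos by (auto simp: q_def)
    have "(nbr_avg f u)^2 \<le> 2 * (q * walk_avg f u)^2 + 2 * e^2"
      unfolding e(1) q_def[symmetric] by (rule square_sum_le)
    also have "(q * walk_avg f u)^2 \<le> (walk_avg f u)^2"
    proof -
      have "q^2 \<le> 1" using \<open>0 \<le> q\<close> \<open>q \<le> 1\<close> by (simp add: power_le_one)
      then have "q^2 * (walk_avg f u)^2 \<le> (walk_avg f u)^2" by (intro mult_left_le_one_le) auto
      then show ?thesis by (simp add: power_mult_distrib)
    qed
    also have "e^2 \<le> (real b / real d)^2" using e(2) by (metis abs_ge_zero power2_abs power_mono)
    finally show ?thesis by simp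
  qed
  then have "(\<Sum>u\<in>S. (nbr_avg f u)^2) \<le> (\<Sum>u\<in>S. 2 * (walk_avg f u)^2 + 2 * (real b / real d)^2)"
    by (intro sum_mono) auto
  also have "\<dots> = 2 * (\<Sum>u\<in>S. (walk_avg f u)^2) + 2 * real n * (real b / real d)^2"
    by (simp add: sum.distrib sum_distrib_left card_S)
  finally show ?thesis .
qed

lemma sum_nbr_avg_ge:
  assumes f_bound: "\<And>v. \<bar>f v\<bar> \<le> 1"
  shows "(\<Sum>u\<in>S. nbr_avg f u) \<ge> (\<Sum>u\<in>S. f u) - 2 * real n * (real b / real d)"
proof -
  define s where "s = (\<Sum>v\<in>S. f v)"
  define t where "t = (\<Sum>v\<in>T. f v)"
  have "\<bar>s\<bar> \<le> real (card S)" "\<bar>t\<bar> \<le> real (card T)"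
    unfolding s_def t_def by (intro abs_sum_le_card f_bound)+
  then have "\<bar>s\<bar> \<le> real n" "\<bar>t\<bar> \<le> real n" using card_S card_T by simp_all
  then have "real b / real d * (s - t) \<le> real b / real d * (2 * real n)"
    by (intro mult_left_mono) auto
  moreover have "(\<Sum>u\<in>S. nbr_avg f u) = s - real b / real d * (s - t)"
  proof -
    have "real d = real D + real b" "real D + real b \<noteq> 0" using d_eq D_pos by auto
    then show ?thesis by (simp add: sum_nbr_avg s_def t_def field_simps)
  qed
  ultimately show ?thesis by (simp add: s_def algebra_simps)
qed

definition node_update :: "(nat \<Rightarrow> bool) \<Rightarrow> nat \<Rightarrow> bool pmf" where
  "node_update c u = do { x \<leftarrow> pmf_of_set (nbrs E V u); y \<leftarrow> pmf_of_set (nbrs E V u);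
          return_pmf (if c x = c y then c x else c u) }"

lemma two_choices_step_eq_Pi_pmf: "two_choices_step E V c = Pi_pmf V False (node_update c)"
  unfolding two_choices_step_def node_update_def by simp

lemma expectation_node_update_ge:
  fixes c :: "nat \<Rightarrow> bool"
  assumes "u \<in> S" and tau: "\<tau> = 1 \<or> \<tau> = -1"
  defines "f \<equiv> \<lambda>v. \<tau> * spin (c v)"
  shows "measure_pmf.expectation (node_update c u) (\<lambda>x. \<tau> * spin x)
    \<ge> nbr_avg f u + f u / 2 - (nbr_avg f u)^2 / 2"
proof -
  have "card (nbrs E V u) = d" using card_nbrs_V[OF \<open>u \<in> S\<close>] .
  then have "nbrs E V u \<noteq> {}" using d_pos by auto
  then have "measure_pmf.expectation (node_update c u) (\<lambda>x. \<tau> * spin x)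
      = nbr_avg f u + f u * (1 - (nbr_avg f u)^2) / 2"
    unfolding node_update_def
    using expectation_two_choices_vote[OF finite_nbrs[of V] _ tau, of u c "c u"] \<open>card (nbrs E V u) = d\<close>
    by (simp add: nbr_avg_def f_def)
  moreover have "f u * (nbr_avg f u)^2 \<le> (nbr_avg f u)^2"
    using tau by (auto simp: f_def spin_def)
  moreover have "f u * (1 - (nbr_avg f u)^2) = f u - f u * (nbr_avg f u)^2"
    by (simp add: algebra_simps)
  ultimately show ?thesis by linarith
qed

lemma sum_expectation_node_update_ge:
  fixes c :: "nat \<Rightarrow> bool"
  assumes tau: "\<tau> = 1 \<or> \<tau> = -1" and conn: "connected_on E S"
  defines "s \<equiv> (\<Sum>u\<in>S. \<tau> * spin (c u))"
  shows "(\<Sum>u\<in>S. measure_pmf.expectation (node_update c u) (\<lambda>x. \<tau> * spin x))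
     \<ge> 3/2 * s - s^2 / real n - 2 * real n * (real b / real d)
       - (walk_lambda E S)^2 * real n - real n * (real b / real d)^2"
proof -
  define f where "f = (\<lambda>v. \<tau> * spin (c v))"
  have f_bound: "\<bar>f v\<bar> \<le> 1" and f_sq: "(f v)^2 = 1" for v
    using tau by (auto simp: f_def spin_def)
  have "(\<Sum>u\<in>S. measure_pmf.expectation (node_update c u) (\<lambda>x. \<tau> * spin x))
      \<ge> (\<Sum>u\<in>S. nbr_avg f u + f u / 2 - (nbr_avg f u)^2 / 2)"
    unfolding f_def by (intro sum_mono expectation_node_update_ge tau)
  moreover have "(\<Sum>u\<in>S. nbr_avg f u + f u / 2 - (nbr_avg f u)^2 / 2)
      = (\<Sum>u\<in>S. nbr_avg f u) + s / 2 - (\<Sum>u\<in>S. (nbr_avg f u)^2) / 2"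
    by (simp add: sum.distrib sum_subtractf sum_divide_distrib s_def f_def)
  moreover have "(\<Sum>u\<in>S. nbr_avg f u) \<ge> s - 2 * real n * (real b / real d)"
    using sum_nbr_avg_ge[OF f_bound] by (simp add: s_def f_def)
  moreover have "(\<Sum>u\<in>S. (nbr_avg f u)^2)
      \<le> 2 * (s^2 / real n + (walk_lambda E S)^2 * real n) + 2 * real n * (real b / real d)^2"
  proof -
    have "(\<Sum>u\<in>S. (f u)^2) = real n" using card_S by (simp add: f_sq)
    then have "(\<Sum>u\<in>S. (walk_avg f u)^2) \<le> s^2 / real n + (walk_lambda E S)^2 * real n"
      using sum_sq_walk_avg_le_walk_lambda[OF conn S_nonempty, of f] card_S by (simp add: s_def f_def)
    then show ?thesis
      using sum_sq_nbr_avg_le[of f, OF f_bound] by (smt (verit, ccfv_threshold) mult_left_mono)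
  qed
  ultimately show ?thesis by (simp add: field_simps)
qed

lemma two_choices_step_lower_tail:
  assumes tau: "\<tau> = 1 \<or> \<tau> = -1" and conn: "connected_on E S" and "\<epsilon> \<ge> 0"
    and LB: "LB \<le> 3/2 * (\<Sum>u\<in>S. \<tau> * spin (c u)) - (\<Sum>u\<in>S. \<tau> * spin (c u))^2 / real n
        - 2 * real n * (real b / real d) - (walk_lambda E S)^2 * real n - real n * (real b / real d)^2"
  shows "measure_pmf.prob (two_choices_step E V c) {c'. (\<Sum>u\<in>S. \<tau> * spin (c' u)) \<le> LB - \<epsilon>}
         \<le> exp (- (\<epsilon>^2) / (2 * real n))"
proof -
  have "S \<subseteq> V" using V_eq by auto
  have h_range: "\<tau> * spin x \<in> {-1..1}" for x using tau by (auto simp: spin_def)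
  have "measure_pmf.prob (Pi_pmf V False (node_update c))
      {c'. (\<Sum>u\<in>S. \<tau> * spin (c' u))
         \<le> (\<Sum>u\<in>S. measure_pmf.expectation (node_update c u) (\<lambda>x. \<tau> * spin x)) - \<epsilon>}
      \<le> exp (- (\<epsilon>^2) / (2 * real n))"
    using Pi_pmf_sum_lower_tail[OF finite_V \<open>S \<subseteq> V\<close> S_nonempty h_range \<open>\<epsilon> \<ge> 0\<close>] card_S
    by simp
  moreover have "{c'. (\<Sum>u\<in>S. \<tau> * spin (c' u)) \<le> LB - \<epsilon>} \<subseteq>
      {c'. (\<Sum>u\<in>S. \<tau> * spin (c' u))
         \<le> (\<Sum>u\<in>S. measure_pmf.expectation (node_update c u) (\<lambda>x. \<tau> * spin x)) - \<epsilon>}"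
    using sum_expectation_node_update_ge[OF tau conn, of c] LB by auto
  ultimately show ?thesis
    unfolding two_choices_step_eq_Pi_pmf
    by (smt (verit, best) measure_pmf.finite_measure_mono sets_measure_pmf UNIV_I)
qed

end

section \<open>Hitting probabilities of Markov chain trajectories\<close>

lemma measure_pmf_prob_bind:
  "measure_pmf.prob (bind_pmf M N) X = measure_pmf.expectation M (\<lambda>x. measure_pmf.prob (N x) X)"
  unfolding measure_pmf_bind
  by (rule measure_pmf.measure_bind[where N="count_space UNIV"])
     (auto simp: space_subprob_algebra measure_pmf.subprob_space_axioms)

lemma expectation_ge_mult_prob:
  fixes f :: "'a \<Rightarrow> real"
  assumes "\<And>x. f x \<ge> 0" "\<And>x. f x \<le> 1" "\<And>x. x \<in> B \<Longrightarrow> f x \<ge> \<gamma>" "\<gamma> \<ge> 0"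
  shows "measure_pmf.expectation p f \<ge> \<gamma> * measure_pmf.prob p B"
proof -
  have "measure_pmf.expectation p (\<lambda>x. \<gamma> * indicator B x) \<le> measure_pmf.expectation p f"
  proof (rule integral_mono)
    show "integrable (measure_pmf p) (\<lambda>x. \<gamma> * indicator B x)"
      by (rule measure_pmf.integrable_const_bound[of _ \<gamma>]) (auto simp: assms(4) indicator_def)
    show "integrable (measure_pmf p) f"
      by (rule measure_pmf.integrable_const_bound[of _ 1]) (use assms in auto)
    fix x show "\<gamma> * indicator B x \<le> f x" using assms by (auto simp: indicator_def)
  qed
  then show ?thesis by simp
qed

fun chain_traj :: "('c \<Rightarrow> 'c pmf) \<Rightarrow> 'c pmf \<Rightarrow> nat \<Rightarrow> 'c list pmf" where
  "chain_traj st \<mu> 0 = map_pmf (\<lambda>c. [c]) \<mu>"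
| "chain_traj st \<mu> (Suc t) = chain_traj st \<mu> t \<bind> (\<lambda>cs. map_pmf (\<lambda>c'. cs @ [c']) (st (last cs)))"

lemma trajectory_eq_chain_traj: "trajectory E V t = chain_traj (two_choices_step E V) (init_config V) t"
  by (induction t) auto

lemma chain_traj_nonempty: "cs \<in> set_pmf (chain_traj st \<mu> t) \<Longrightarrow> cs \<noteq> []"
  by (induction t arbitrary: cs) auto

lemma chain_traj_Suc_first_step:
  "chain_traj st \<mu> (Suc t) = \<mu> \<bind> (\<lambda>c. map_pmf ((#) c) (chain_traj st (st c) t))"
proof (induction t arbitrary: \<mu>)
  case 0
  show ?case by (simp add: bind_map_pmf map_pmf_comp)
next
  case (Suc t)
  have "chain_traj st \<mu> (Suc (Suc t)) =
      (\<mu> \<bind> (\<lambda>c. map_pmf ((#) c) (chain_traj st (st c) t)))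
        \<bind> (\<lambda>cs. map_pmf (\<lambda>c'. cs @ [c']) (st (last cs)))"
    by (simp only: chain_traj.simps(2)[of st \<mu> "Suc t"] Suc.IH)
  also have "\<dots> = \<mu> \<bind> (\<lambda>c. chain_traj st (st c) t
      \<bind> (\<lambda>cs. map_pmf (\<lambda>c'. (c # cs) @ [c']) (st (last (c # cs)))))"
    by (simp add: bind_assoc_pmf bind_map_pmf)
  also have "\<dots> = \<mu> \<bind> (\<lambda>c. chain_traj st (st c) t
      \<bind> (\<lambda>cs. map_pmf ((#) c) (map_pmf (\<lambda>c'. cs @ [c']) (st (last cs)))))"
  proof (intro bind_pmf_cong refl)
    fix c cs assume "cs \<in> set_pmf (chain_traj st (st c) t)"
    then have "cs \<noteq> []" by (rule chain_traj_nonempty)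
    then show "map_pmf (\<lambda>c'. (c # cs) @ [c']) (st (last (c # cs)))
        = map_pmf ((#) c) (map_pmf (\<lambda>c'. cs @ [c']) (st (last cs)))"
      by (simp add: map_pmf_comp)
  qed
  also have "\<dots> = \<mu> \<bind> (\<lambda>c. map_pmf ((#) c) (chain_traj st (st c) (Suc t)))"
    by (simp add: map_bind_pmf)
  finally show ?case .
qed

lemma chain_traj_bind: "chain_traj st \<mu> t = \<mu> \<bind> (\<lambda>c. chain_traj st (return_pmf c) t)"
proof (induction t)
  case 0 show ?case by (simp add: map_pmf_def bind_return_pmf)
next
  case (Suc t) show ?case by (simp only: chain_traj.simps(2) Suc bind_assoc_pmf)
qed

definition hits :: "('c \<Rightarrow> bool) \<Rightarrow> 'c list set" where
  "hits G = {cs. \<exists>i < length cs. G (cs ! i)}"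

lemma Cons_in_hits_iff: "c # cs \<in> hits G \<longleftrightarrow> G c \<or> cs \<in> hits G"
  unfolding hits_def by (auto simp: nth_Cons' split: if_splits)

lemma snoc_in_hits: "cs \<in> hits G \<Longrightarrow> cs @ [c] \<in> hits G"
  unfolding hits_def by (auto simp: nth_append)

lemma prob_chain_traj_hits_Suc:
  "measure_pmf.prob (chain_traj st (return_pmf c) (Suc t)) (hits G) =
   (if G c then 1
    else measure_pmf.expectation (st c) (\<lambda>c'. measure_pmf.prob (chain_traj st (return_pmf c') t) (hits G)))"
proof -
  have "chain_traj st (return_pmf c) (Suc t) = map_pmf ((#) c) (chain_traj st (st c) t)"
    by (simp only: chain_traj_Suc_first_step bind_return_pmf)
  moreover have "(#) c -` hits G = (if G c then UNIV else hits G)"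
    using Cons_in_hits_iff[of c _ G] by auto
  ultimately have "measure_pmf.prob (chain_traj st (return_pmf c) (Suc t)) (hits G) =
      (if G c then 1 else measure_pmf.prob (chain_traj st (st c) t) (hits G))"
    by (simp add: measure_map_pmf)
  then show ?thesis
    by (simp add: chain_traj_bind[of st "st c"] measure_pmf_prob_bind)
qed

lemma prob_chain_traj_hits_mono:
  assumes "t \<le> t'"
  shows "measure_pmf.prob (chain_traj st \<mu> t) (hits G) \<le> measure_pmf.prob (chain_traj st \<mu> t') (hits G)"
  using assms
proof (induction t' rule: dec_induct)
  case (step t')
  have "measure_pmf.prob (chain_traj st \<mu> (Suc t')) (hits G) = measure_pmf.expectation (chain_traj st \<mu> t')
      (\<lambda>cs. measure_pmf.prob (map_pmf (\<lambda>c'. cs @ [c']) (st (last cs))) (hits G))"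
    by (simp add: measure_pmf_prob_bind)
  also have "\<dots> \<ge> 1 * measure_pmf.prob (chain_traj st \<mu> t') (hits G)"
  proof (rule expectation_ge_mult_prob)
    fix cs assume "cs \<in> hits G"
    then have "(\<lambda>c'. cs @ [c']) -` hits G = UNIV" using snoc_in_hits by auto
    then show "measure_pmf.prob (map_pmf (\<lambda>c'. cs @ [c']) (st (last cs))) (hits G) \<ge> 1"
      by (simp add: measure_map_pmf)
  qed auto
  finally show ?case using step.IH by simp
qed simp

lemma multiplicative_drift_recurrence:
  fixes A :: real
  assumes "A \<noteq> 0"
  shows "(1 - 1400 / (6/5 * A)^2) * (1 - 400 / A^2) \<ge> 1 - 1400 / A^2"
proof -
  define u where "u = 1 / A^2"
  have "u \<ge> 0" by (simp add: u_def)
  have "(1 - 1400 / (6/5 * A)^2) * (1 - 400 / A^2) = (1 - 8750/9 * u) * (1 - 400 * u)"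
    using assms by (simp add: u_def power2_eq_square field_simps)
  also have "\<dots> = (1 - 1400 * u) + (250/9 * u + 3500000/9 * (u * u))" by (simp add: field_simps)
  also have "\<dots> \<ge> 1 - 1400 * u" using \<open>u \<ge> 0\<close> mult_nonneg_nonneg[OF \<open>u \<ge> 0\<close> \<open>u \<ge> 0\<close>] by linarith
  finally show ?thesis by (simp add: u_def)
qed

text \<open>
  Multiplicative drift, with \<open>G A\<close> read as ``progress \<open>A\<close>''. The failure bound \<open>1400/A\<^sup>2\<close>
  survives the induction on \<open>k\<close> because \<open>(1 - 1400/(6/5 A)\<^sup>2) (1 - 400/A\<^sup>2) \<ge> 1 - 1400/A\<^sup>2\<close>.
\<close>

lemma multiplicative_drift_hits:
  fixes st :: "'c \<Rightarrow> 'c pmf" and Target :: "'c \<Rightarrow> bool" and G :: "real \<Rightarrow> 'c \<Rightarrow> bool"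
  assumes reached: "\<And>A c. A \<ge> L \<Longrightarrow> G A c \<Longrightarrow> Target c"
    and step: "\<And>A c. A0 \<le> A \<Longrightarrow> A < L \<Longrightarrow> G A c \<Longrightarrow> \<not> Target c \<Longrightarrow>
        measure_pmf.prob (st c) {c'. \<not> G (6/5 * A) c'} \<le> 400 / A^2"
    and "A0 \<ge> 32"
  shows "A0 \<le> A \<Longrightarrow> L \<le> A * (6/5)^k \<Longrightarrow> G A c \<Longrightarrow>
     measure_pmf.prob (chain_traj st (return_pmf c) k) (hits Target) \<ge> 1 - 1400 / A^2"
proof (induction k arbitrary: A c)
  case 0
  then show ?case using reached by (simp add: hits_def)
next
  case (Suc k)
  show ?case
  proof (cases "Target c")
    case True
    then show ?thesis by (subst prob_chain_traj_hits_Suc) simp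
  next
    case False
    have "A < L" using reached[of A c] Suc.prems(3) False by linarith
    have "A \<ge> 32" using Suc.prems \<open>A0 \<ge> 32\<close> by linarith
    define \<gamma> where "\<gamma> = 1 - 1400 / (6/5 * A)^2"
    have "\<gamma> \<ge> 0"
    proof -
      have "A^2 \<ge> 32^2" using \<open>A \<ge> 32\<close> by (intro power_mono) auto
      have "1400 / (6/5 * A)^2 = 1400 / (36/25 * A^2)" by (simp add: power2_eq_square)
      also have "\<dots> \<le> 1" using \<open>A^2 \<ge> 32^2\<close> by (simp add: divide_le_eq)
      finally show ?thesis by (simp add: \<gamma>_def)
    qed
    have IH: "measure_pmf.prob (chain_traj st (return_pmf c') k) (hits Target) \<ge> \<gamma>"
      if "G (6/5 * A) c'" for c'
      unfolding \<gamma>_def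
    proof (rule Suc.IH)
      show "A0 \<le> 6/5 * A" "L \<le> 6/5 * A * (6/5)^k" using Suc.prems \<open>A \<ge> 32\<close> by (simp_all add: algebra_simps)
    qed (rule that)
    have "measure_pmf.prob (st c) {c'. G (6/5 * A) c'} = 1 - measure_pmf.prob (st c) {c'. \<not> G (6/5 * A) c'}"
      using measure_pmf.prob_compl[of "{c'. \<not> G (6/5 * A) c'}" "st c"]
      by (simp add: Compl_eq_Diff_UNIV[symmetric] Collect_neg_eq[symmetric])
    also have "\<dots> \<ge> 1 - 400 / A^2" using step[OF Suc.prems(1) \<open>A < L\<close> Suc.prems(3) False] by simp
    finally have "\<gamma> * measure_pmf.prob (st c) {c'. G (6/5 * A) c'} \<ge> \<gamma> * (1 - 400 / A^2)"
      using \<open>\<gamma> \<ge> 0\<close> by (intro mult_left_mono)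
    moreover have "measure_pmf.prob (chain_traj st (return_pmf c) (Suc k)) (hits Target)
        \<ge> \<gamma> * measure_pmf.prob (st c) {c'. G (6/5 * A) c'}"
      using False IH \<open>\<gamma> \<ge> 0\<close>
      by (subst prob_chain_traj_hits_Suc) (simp, intro expectation_ge_mult_prob, auto)
    moreover have "\<gamma> * (1 - 400 / A^2) \<ge> 1 - 1400 / A^2"
      unfolding \<gamma>_def using \<open>A \<ge> 32\<close> by (intro multiplicative_drift_recurrence) simp
    ultimately show ?thesis by linarith
  qed
qed

section \<open>The random initial configuration\<close>

lemma card_red_add_card_blue:
  "finite S \<Longrightarrow> card {u\<in>S. c u} + card {u\<in>S. \<not> c u} = card S"
  by (subst card_Un_disjoint[symmetric]) (auto intro: arg_cong[where f=card])

lemma bias_eq_card_red: "finite S \<Longrightarrow> real_of_int (bias S c) = 2 * real (card {u\<in>S. c u}) - real (card S)"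
  using card_red_add_card_blue[of S c] unfolding bias_def by linarith

lemma neg_bias_eq_card_blue:
  "finite S \<Longrightarrow> - real_of_int (bias S c) = 2 * real (card {u\<in>S. \<not> c u}) - real (card S)"
  using card_red_add_card_blue[of S c] unfolding bias_def by linarith

lemma bias_eq_sum_spin: "finite S \<Longrightarrow> real_of_int (bias S c) = (\<Sum>u\<in>S. spin (c u))"
proof -
  assume "finite S"
  then have "(\<Sum>u\<in>S. spin (c u)) = (\<Sum>u\<in>{u\<in>S. c u}. spin (c u)) + (\<Sum>u\<in>{u\<in>S. \<not> c u}. spin (c u))"
    by (subst sum.union_disjoint[symmetric]) (auto intro: sum.cong)
  then show ?thesis by (simp add: spin_def bias_def)
qed

lemma prob_pair_pmf_Times:
  "measure_pmf.prob (pair_pmf M N) (A \<times> B) = measure_pmf.prob M A * measure_pmf.prob N B"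
proof -
  have "measure_pmf.prob (pair_pmf M N) (A \<times> B) =
      measure_pmf.expectation M (\<lambda>x. measure_pmf.prob (map_pmf (Pair x) N) (A \<times> B))"
    unfolding pair_pmf_def by (simp add: measure_pmf_prob_bind map_pmf_def)
  also have "\<dots> = measure_pmf.expectation M (\<lambda>x. indicator A x * measure_pmf.prob N B)"
  proof (intro Bochner_Integration.integral_cong refl)
    fix x
    have "Pair x -` (A \<times> B) = (if x \<in> A then B else {})" by auto
    then show "measure_pmf.prob (map_pmf (Pair x) N) (A \<times> B) = indicator A x * measure_pmf.prob N B"
      by (simp add: measure_map_pmf)
  qed
  finally show ?thesis by simp
qed

lemma pmf_of_set_bool_eq_bernoulli: "pmf_of_set {True, False} = bernoulli_pmf (1/2)"
  by (simp add: bernoulli_pmf_half_conv_pmf_of_set UNIV_bool insert_commute)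

lemma map_pmf_Not_pmf_of_set_bool: "map_pmf Not (pmf_of_set {True, False}) = pmf_of_set {True, False}"
  by (subst map_pmf_of_set_inj) (auto simp: inj_on_def insert_commute)

lemma map_pmf_card_Pi_pmf_coin:
  assumes "finite V"
  shows "map_pmf (\<lambda>f. card {u\<in>V. f u}) (Pi_pmf V False (\<lambda>_. pmf_of_set {True, False}))
      = binomial_pmf (card V) (1/2)"
    and "map_pmf (\<lambda>f. card {u\<in>V. \<not> f u}) (Pi_pmf V False (\<lambda>_. pmf_of_set {True, False}))
      = binomial_pmf (card V) (1/2)"
proof -
  let ?coin = "\<lambda>_::'a. pmf_of_set {True, False}"
  have red: "binomial_pmf (card V) (1/2) = map_pmf (\<lambda>f. card {u\<in>V. f u}) (Pi_pmf V dflt ?coin)" for dflt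
    unfolding pmf_of_set_bool_eq_bernoulli by (rule binomial_pmf_altdef'[OF assms refl]) auto
  then show "map_pmf (\<lambda>f. card {u\<in>V. f u}) (Pi_pmf V False ?coin) = binomial_pmf (card V) (1/2)"
    by simp
  have "Pi_pmf V True (\<lambda>x. map_pmf Not (?coin x)) = map_pmf ((\<circ>) Not) (Pi_pmf V False ?coin)"
    by (rule Pi_pmf_map[OF assms]) simp
  then have "Pi_pmf V True ?coin = map_pmf ((\<circ>) Not) (Pi_pmf V False ?coin)"
    by (simp only: map_pmf_Not_pmf_of_set_bool)
  then show "map_pmf (\<lambda>f. card {u\<in>V. \<not> f u}) (Pi_pmf V False ?coin) = binomial_pmf (card V) (1/2)"
    using red[of True] by (simp add: map_pmf_comp)
qed

lemma prob_init_config_red_blue: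
  assumes f1: "finite V1" and f2: "finite V2" and disj: "V1 \<inter> V2 = {}"
    and c1: "card V1 = n" and c2: "card V2 = n"
  shows "measure_pmf.prob (init_config (V1 \<union> V2))
      {c. t \<le> real (card {u\<in>V1. c u}) \<and> t \<le> real (card {u\<in>V2. \<not> c u})}
    = (measure_pmf.prob (binomial_pmf n (1/2)) {k. t \<le> real k})^2"
proof -
  let ?coin = "\<lambda>_::nat. pmf_of_set {True, False}"
  let ?glue = "\<lambda>(f::nat\<Rightarrow>bool, g) x. if x \<in> V1 then f x else g x"
  define A where "A = {f::nat\<Rightarrow>bool. t \<le> real (card {u\<in>V1. f u})}"
  define B where "B = {g::nat\<Rightarrow>bool. t \<le> real (card {u\<in>V2. \<not> g u})}"
  have "init_config (V1 \<union> V2) = map_pmf ?glue (pair_pmf (Pi_pmf V1 False ?coin) (Pi_pmf V2 False ?coin))"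
    unfolding init_config_def by (rule Pi_pmf_union[OF f1 f2 disj])
  moreover have "?glue -` {c. t \<le> real (card {u\<in>V1. c u}) \<and> t \<le> real (card {u\<in>V2. \<not> c u})} = A \<times> B"
  proof -
    have e1: "{u\<in>V1. (if u \<in> V1 then f u else g u)} = {u\<in>V1. f u}" for f g :: "nat \<Rightarrow> bool"
      by auto
    have e2: "{u\<in>V2. \<not> (if u \<in> V1 then f u else g u)} = {u\<in>V2. \<not> g u}" for f g :: "nat \<Rightarrow> bool"
      using disj by auto
    show ?thesis unfolding A_def B_def
      by (auto simp only: vimage_def mem_Collect_eq mem_Times_iff prod.case fst_conv snd_conv e1 e2)
  qed
  moreover have "measure_pmf.prob (Pi_pmf V1 False ?coin) A
      = measure_pmf.prob (map_pmf (\<lambda>f. card {u\<in>V1. f u}) (Pi_pmf V1 False ?coin)) {k. t \<le> real k}"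
    unfolding A_def by (simp add: measure_map_pmf vimage_def)
  moreover have "measure_pmf.prob (Pi_pmf V2 False ?coin) B
      = measure_pmf.prob (map_pmf (\<lambda>f. card {u\<in>V2. \<not> f u}) (Pi_pmf V2 False ?coin)) {k. t \<le> real k}"
    unfolding B_def by (simp add: measure_map_pmf vimage_def)
  ultimately show ?thesis
    using map_pmf_card_Pi_pmf_coin[OF f1] map_pmf_card_Pi_pmf_coin[OF f2] c1 c2
    by (simp add: measure_map_pmf prob_pair_pmf_Times power2_eq_square)
qed

lemma pmf_binomial_half: "pmf (binomial_pmf n (1/2)) k = real (n choose k) / 2^n"
proof (cases "k \<le> n")
  case True
  then have "(1/2::real)^k * (1/2)^(n-k) = (1/2)^n" by (simp add: power_add[symmetric])
  then show ?thesis by (simp add: pmf_binomial power_one_over)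
qed (simp add: pmf_binomial binomial_eq_0)

lemma pmf_binomial_half_Suc:
  assumes "i < n"
  shows "pmf (binomial_pmf n (1/2)) (Suc i) * real (Suc i) = pmf (binomial_pmf n (1/2)) i * (real n - real i)"
proof -
  have "Suc i * (n choose Suc i) = (n - i) * (n choose i)"
    using binomial_absorption[of i n] binomial_absorb_comp[of n i] by simp
  then have "real (Suc i) * real (n choose Suc i) = real (n - i) * real (n choose i)"
    by (metis of_nat_mult)
  then show ?thesis using assms by (simp add: pmf_binomial_half of_nat_diff field_simps)
qed

lemma pmf_binomial_half_Suc_ge:
  fixes a :: real
  assumes "a \<ge> 0" and r16: "sqrt (real n) \<ge> 16 * (a + 4)"
    and i_low: "real n / 2 - sqrt (real n) \<le> real i" and i_high: "real i \<le> real n / 2 + (a + 3) * sqrt (real n)"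
  shows "pmf (binomial_pmf n (1/2)) (Suc i) \<ge> (1 - 8 * (a + 4) / sqrt (real n)) * pmf (binomial_pmf n (1/2)) i"
proof -
  define r where "r = sqrt (real n)"
  define x where "x = 8 * (a + 4) / r"
  have "16 * (a + 4) > 0" using \<open>a \<ge> 0\<close> by simp
  then have "r > 0" using r16 unfolding r_def by linarith
  have rr: "r * r = real n" unfolding r_def by simp
  have r4: "r * r \<ge> 4 * r" using r16 \<open>a \<ge> 0\<close> \<open>r > 0\<close> unfolding r_def[symmetric] by (intro mult_right_mono) auto
  have "i < n"
  proof -
    have "(a + 3) * r < r * r / 2" using r16 \<open>r > 0\<close> \<open>a \<ge> 0\<close> unfolding r_def[symmetric]
      by (simp add: mult_strict_right_mono)
    then show ?thesis using i_high rr unfolding r_def[symmetric] by linarith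
  qed
  have "real n - real i \<ge> (1 - x) * (real i + 1)"
  proof -
    have "real i + 1 \<ge> r * r / 4" using i_low r4 rr unfolding r_def[symmetric] by linarith
    then have "x * (real i + 1) \<ge> x * (r * r / 4)" using \<open>a \<ge> 0\<close> \<open>r > 0\<close>
      by (intro mult_left_mono) (auto simp: x_def)
    also have "x * (r * r / 4) = 2 * (a + 4) * r" unfolding x_def using \<open>r > 0\<close> by (simp add: field_simps)
    finally have "x * (real i + 1) \<ge> 2 * (a + 4) * r" .
    moreover have "2 * (a + 4) * r \<ge> 2 * (a + 3) * r + 1"
      using r16 \<open>a \<ge> 0\<close> unfolding r_def[symmetric] by (simp add: algebra_simps)
    ultimately show ?thesis using i_high unfolding r_def[symmetric] by (simp add: algebra_simps)
  qed
  define p where "p = pmf (binomial_pmf n (1/2))"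
  have "p i * (real n - real i) \<ge> p i * ((1 - x) * (real i + 1))"
    using \<open>real n - real i \<ge> (1 - x) * (real i + 1)\<close> by (intro mult_left_mono) (auto simp: p_def)
  moreover have "p (Suc i) * real (Suc i) = p i * (real n - real i)"
    unfolding p_def by (rule pmf_binomial_half_Suc[OF \<open>i < n\<close>])
  ultimately have "p (Suc i) * (real i + 1) \<ge> ((1 - x) * p i) * (real i + 1)"
    by (simp add: algebra_simps)
  then have "p (Suc i) \<ge> (1 - x) * p i" by (simp add: mult_le_cancel_right add_pos_nonneg)
  then show ?thesis unfolding p_def x_def r_def .
qed

lemma pmf_binomial_half_shift_ge:
  fixes a :: real
  assumes "a \<ge> 0" and r16: "sqrt (real n) \<ge> 16 * (a + 4)"
    and k_low: "real n / 2 - sqrt (real n) \<le> real k" and k_high: "real k \<le> real n / 2 + sqrt (real n)"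
  shows "real j \<le> (a + 2) * sqrt (real n) \<Longrightarrow>
    pmf (binomial_pmf n (1/2)) (k + j) \<ge> (1 - 8 * (a + 4) / sqrt (real n))^j * pmf (binomial_pmf n (1/2)) k"
proof (induction j)
  case (Suc j)
  define x where "x = 8 * (a + 4) / sqrt (real n)"
  define p where "p = pmf (binomial_pmf n (1/2))"
  have "16 * (a + 4) > 0" using \<open>a \<ge> 0\<close> by simp
  then have "x \<le> 1/2" unfolding x_def using r16 by (simp add: divide_le_eq)
  have "real (k + j) \<le> real n / 2 + (a + 3) * sqrt (real n)"
    using k_high Suc.prems by (simp add: algebra_simps)
  then have "p (Suc (k + j)) \<ge> (1 - x) * p (k + j)"
    unfolding x_def p_def using \<open>a \<ge> 0\<close> r16 k_low by (intro pmf_binomial_half_Suc_ge) auto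
  moreover have "p (k + j) \<ge> (1 - x)^j * p k"
    using Suc.IH Suc.prems unfolding x_def p_def by simp
  then have "(1 - x) * p (k + j) \<ge> (1 - x) * ((1 - x)^j * p k)"
    using \<open>x \<le> 1/2\<close> by (intro mult_left_mono) auto
  ultimately have "p (k + Suc j) \<ge> (1 - x)^(Suc j) * p k" by (simp add: mult.assoc)
  then show ?case unfolding x_def p_def .
qed simp

lemma prob_shifted_image_ge:
  fixes M :: "nat pmf"
  assumes "finite W" and shift: "\<And>k. k \<in> W \<Longrightarrow> pmf M (k + J) \<ge> \<theta> * pmf M k"
  shows "measure_pmf.prob M ((\<lambda>k. k + J) ` W) \<ge> \<theta> * measure_pmf.prob M W"
proof -
  have "measure_pmf.prob M ((\<lambda>k. k + J) ` W) = (\<Sum>k\<in>W. pmf M (k + J))"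
    using \<open>finite W\<close> by (simp add: measure_measure_pmf_finite sum.reindex)
  also have "\<dots> \<ge> (\<Sum>k\<in>W. \<theta> * pmf M k)" by (intro sum_mono shift)
  also have "(\<Sum>k\<in>W. \<theta> * pmf M k) = \<theta> * measure_pmf.prob M W"
    using \<open>finite W\<close> by (simp add: measure_measure_pmf_finite sum_distrib_left)
  finally show ?thesis .
qed

lemma exp_le_one_minus_power:
  assumes "0 \<le> x" "x \<le> 1/2"
  shows "exp (- (2 * x * real J)) \<le> (1 - x)^J"
proof -
  have "2 * x * x \<le> 1 * x" using assms by (intro mult_right_mono) auto
  then have "ln (1 - x) \<ge> -2 * x"
    using ln_one_minus_pos_lower_bound[OF assms] by (simp add: power2_eq_square)
  then have "real J * ln (1 - x) \<ge> - (2 * x * real J)"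
    using mult_left_mono[of "-2 * x" "ln (1 - x)" "real J"] by (simp add: algebra_simps)
  then have "exp (- (2 * x * real J)) \<le> exp (real J * ln (1 - x))" by simp
  also have "\<dots> = (1 - x)^J" using assms by (simp add: exp_of_nat_mult)
  finally show ?thesis .
qed

lemma binomial_half_central_mass:
  assumes "n > 0"
  shows "measure_pmf.prob (binomial_pmf n (1/2)) {k. \<bar>real k - real n / 2\<bar> \<le> sqrt (real n)} \<ge> 1/2"
proof -
  let ?B = "binomial_pmf n (1/2)" and ?r = "sqrt (real n)"
  have "exp (2::real) \<ge> 4"
    using exp_ge_add_one_self[of 1] mult_mono[of 2 "exp 1" 2 "exp (1::real)"]
    by (simp add: exp_add[symmetric])
  then have "2 * exp (-2::real) \<le> 1/2" by (simp add: exp_minus field_simps)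
  moreover have "measure_pmf.prob ?B {k. ?r \<le> \<bar>real k - real n * (1/2)\<bar>} \<le> 2 * exp (-2 * ?r^2 / real n)"
    by (rule binomial_distribution.prob_abs_ge) (auto simp: binomial_distribution_def assms)
  moreover have "-2 * ?r^2 / real n = -2" using assms by simp
  moreover have "measure_pmf.prob ?B {k. ?r < \<bar>real k - real n / 2\<bar>}
      \<le> measure_pmf.prob ?B {k. ?r \<le> \<bar>real k - real n * (1/2)\<bar>}"
    by (intro measure_pmf.finite_measure_mono) auto
  moreover have "{k. \<bar>real k - real n / 2\<bar> \<le> ?r} = UNIV - {k. ?r < \<bar>real k - real n / 2\<bar>}" by auto
  ultimately show ?thesis using measure_pmf.prob_compl[of "{k. ?r < \<bar>real k - real n / 2\<bar>}" ?B] by simp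
qed

text \<open>
  Anti-concentration: shifting the central window \<open>|k - n/2| \<le> \<surd>n\<close>, of mass at least \<open>1/2\<close>, by
  \<open>J \<approx> (a + 1) \<surd>n\<close> steps costs at most a factor \<open>(1 - 8 (a + 4)/\<surd>n)\<^sup>J \<ge> exp (-16 (a + 4)\<^sup>2)\<close>.
\<close>

lemma binomial_half_upper_deviation:
  fixes a :: real
  assumes "a \<ge> 0" and n_large: "real n \<ge> (16 * (a + 4))^2"
  shows "measure_pmf.prob (binomial_pmf n (1/2)) {k. real n / 2 + a * sqrt (real n) \<le> real k}
    \<ge> exp (-16 * (a + 4)^2) / 2"
proof -
  define r where "r = sqrt (real n)"
  define p where "p = pmf (binomial_pmf n (1/2))"
  define x where "x = 8 * (a + 4) / r"
  define J where "J = nat \<lceil>(a + 1) * r\<rceil>"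
  define \<theta> where "\<theta> = exp (-16 * (a + 4)^2)"
  have r16: "r \<ge> 16 * (a + 4)" unfolding r_def using n_large \<open>a \<ge> 0\<close> by (metis real_le_rsqrt)
  moreover have "16 * (a + 4) > 0" using \<open>a \<ge> 0\<close> by simp
  ultimately have "r > 0" by linarith
  then have "n > 0" unfolding r_def by simp
  have J_low: "real J \<ge> (a + 1) * r" unfolding J_def by linarith
  have J_high: "real J \<le> (a + 1) * r + 1"
    unfolding J_def using \<open>a \<ge> 0\<close> \<open>r > 0\<close> of_int_ceiling_le_add_one[of "(a + 1) * r"] by simp
  have "x \<ge> 0" using \<open>a \<ge> 0\<close> \<open>r > 0\<close> by (simp add: x_def)
  have "x \<le> 1/2" unfolding x_def using r16 \<open>r > 0\<close> by (simp add: divide_le_eq)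
  have "(1 - x)^J \<ge> \<theta>"
  proof -
    have "2 * x * real J \<le> 2 * x * ((a + 1) * r + 1)" using J_high \<open>x \<ge> 0\<close> by (intro mult_left_mono) auto
    also have "\<dots> = 16 * (a + 4) * (a + 1) + 16 * (a + 4) / r"
      unfolding x_def using \<open>r > 0\<close> by (simp add: field_simps)
    also have "16 * (a + 4) / r \<le> 1" using r16 \<open>r > 0\<close> by (simp add: divide_le_eq)
    finally have "2 * x * real J \<le> 16 * (a + 4)^2" using \<open>a \<ge> 0\<close> by (simp add: power2_eq_square algebra_simps)
    then have "\<theta> \<le> exp (- (2 * x * real J))" unfolding \<theta>_def by simp
    also have "\<dots> \<le> (1 - x)^J" by (rule exp_le_one_minus_power[OF \<open>x \<ge> 0\<close> \<open>x \<le> 1/2\<close>])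
    finally show ?thesis .
  qed
  define W where "W = {k. \<bar>real k - real n / 2\<bar> \<le> r}"
  have "finite W"
    by (rule finite_subset[of _ "{..nat \<lceil>real n / 2 + r\<rceil>}"]) (auto simp: W_def abs_le_iff, linarith)
  have "(\<lambda>k. k + J) ` W \<subseteq> {k. real n / 2 + a * sqrt (real n) \<le> real k}"
    using J_low by (auto simp: W_def abs_le_iff r_def algebra_simps)
  then have "measure_pmf.prob (binomial_pmf n (1/2)) {k. real n / 2 + a * sqrt (real n) \<le> real k}
      \<ge> measure_pmf.prob (binomial_pmf n (1/2)) ((\<lambda>k. k + J) ` W)"
    by (intro measure_pmf.finite_measure_mono) auto
  also have "measure_pmf.prob (binomial_pmf n (1/2)) ((\<lambda>k. k + J) ` W)
      \<ge> \<theta> * measure_pmf.prob (binomial_pmf n (1/2)) W"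
  proof (rule prob_shifted_image_ge[OF \<open>finite W\<close>])
    fix k assume "k \<in> W"
    have "real J \<le> (a + 2) * r" using J_high r16 \<open>a \<ge> 0\<close> by (simp add: algebra_simps)
    then have "p (k + J) \<ge> (1 - x)^J * p k"
      using \<open>k \<in> W\<close> \<open>a \<ge> 0\<close> r16 unfolding p_def x_def r_def
      by (intro pmf_binomial_half_shift_ge) (auto simp: W_def abs_le_iff r_def)
    moreover have "(1 - x)^J * p k \<ge> \<theta> * p k"
      using \<open>(1 - x)^J \<ge> \<theta>\<close> by (intro mult_right_mono) (auto simp: p_def)
    ultimately have "\<theta> * p k \<le> p (k + J)" by linarith
    then show "\<theta> * pmf (binomial_pmf n (1/2)) k \<le> pmf (binomial_pmf n (1/2)) (k + J)"
      by (simp only: p_def)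
  qed
  also have "\<theta> * measure_pmf.prob (binomial_pmf n (1/2)) W \<ge> \<theta> * (1/2)"
    using binomial_half_central_mass[OF \<open>n > 0\<close>] by (intro mult_left_mono) (auto simp: \<theta>_def W_def r_def)
  finally show ?thesis by (simp add: \<theta>_def)
qed
section \<open>Growth of the bias in one round\<close>

lemma quadratic_growth_ge:
  fixes n s a :: real
  assumes "n > 0" and "0 \<le> a" and "a \<le> s" and "s \<le> n" and "a \<le> n / 10"
  shows "14/10 * a \<le> 3/2 * s - s^2 / n"
proof -
  have "14/10 * a * n \<le> 3/2 * s * n - s^2"
  proof (cases "s \<le> 3/4 * n")
    case True
    have "(s - a) * (3/2 * n - s - a) \<ge> 0" using True assms by (intro mult_nonneg_nonneg) auto
    moreover have "a * (n/10 - a) \<ge> 0" using assms by (intro mult_nonneg_nonneg) auto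
    moreover have "3/2 * s * n - s^2 - 14/10 * a * n = (s - a) * (3/2 * n - s - a) + a * (n/10 - a)"
      by (simp add: field_simps power2_eq_square)
    ultimately show ?thesis by linarith
  next
    case False
    have "s * (3/2 * n - s) \<ge> s * (n / 2)" using assms by (intro mult_left_mono) auto
    moreover have "s * (n / 2) \<ge> (3/4 * n) * (n / 2)" using False \<open>n > 0\<close> by (intro mult_right_mono) auto
    moreover have "14/10 * a * n \<le> 14/10 * (n/10) * n" using assms by (intro mult_right_mono) auto
    moreover have "3/2 * s * n - s^2 = s * (3/2 * n - s)" by (simp add: field_simps power2_eq_square)
    moreover have "(3/4 * n) * (n / 2) - 14/10 * (n/10) * n = 47/200 * (n * n)" by (simp add: field_simps)
    moreover have "n * n \<ge> 0" by simp
    ultimately show ?thesis by linarith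
  qed
  then show ?thesis using \<open>n > 0\<close> by (simp add: field_simps power2_eq_square)
qed

text \<open>
  Under the hypotheses \<open>b/d \<le> c\<^sub>1 n\<^sup>-\<^sup>1\<^sup>/\<^sup>2\<close> and \<open>\<lambda> \<le> c\<^sub>2 n\<^sup>-\<^sup>1\<^sup>/\<^sup>4\<close> the three error terms of the drift are
  \<open>O(\<surd>n)\<close>, so they are absorbed once the bias is \<open>A \<surd>n\<close> with \<open>A \<ge> 10 (2 c\<^sub>1 + c\<^sub>2\<^sup>2 + c\<^sub>1\<^sup>2)\<close>.
\<close>

lemma drift_lower_bound_numeric:
  fixes n s A \<beta> \<Lambda> c1 c2 :: real
  assumes "n \<ge> 1" and "0 \<le> \<beta>" and \<beta>_small: "\<beta> \<le> c1 * n powr (-1/2)"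
    and "0 \<le> \<Lambda>" and \<Lambda>_small: "\<Lambda> \<le> c2 * n powr (-1/4)"
    and "A \<ge> 0" and "A * sqrt n \<le> s" and "s \<le> n" and "A * sqrt n \<le> n / 10"
    and A_large: "2 * c1 + c2^2 + c1^2 \<le> A / 10"
  shows "13/10 * (A * sqrt n) \<le> 3/2 * s - s^2 / n - 2 * n * \<beta> - \<Lambda>^2 * n - n * \<beta>^2"
proof -
  define r where "r = sqrt n"
  have "r \<ge> 1" using \<open>n \<ge> 1\<close> by (simp add: r_def)
  have rr: "r * r = n" using \<open>n \<ge> 1\<close> by (simp add: r_def)
  have powr_half: "n powr (-1/2) = 1 / r"
    using \<open>n \<ge> 1\<close> by (simp add: r_def powr_minus_divide powr_half_sqrt[symmetric])
  have powr_quarter: "(n powr (-1/4))^2 = 1 / r"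
    using powr_half by (simp add: power2_eq_square powr_add[symmetric])
  have "\<beta> \<le> c1 / r" using \<beta>_small powr_half by simp
  have "2 * n * \<beta> \<le> 2 * c1 * r"
  proof -
    have "n * \<beta> \<le> n * (c1 / r)" using \<open>\<beta> \<le> c1 / r\<close> \<open>n \<ge> 1\<close> by (intro mult_left_mono) auto
    also have "n * (c1 / r) = c1 * r" using rr \<open>r \<ge> 1\<close> by (simp add: field_simps)
    finally show ?thesis by simp
  qed
  moreover have "\<Lambda>^2 * n \<le> c2^2 * r"
  proof -
    have "\<Lambda>^2 \<le> (c2 * n powr (-1/4))^2" using \<open>0 \<le> \<Lambda>\<close> \<Lambda>_small by (intro power_mono) auto
    also have "\<dots> = c2^2 / r" using powr_quarter by (simp add: power_mult_distrib)
    finally have "\<Lambda>^2 * n \<le> c2^2 / r * n" using \<open>n \<ge> 1\<close> by (intro mult_right_mono) auto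
    also have "c2^2 / r * n = c2^2 * r" using rr \<open>r \<ge> 1\<close> by (simp add: field_simps)
    finally show ?thesis .
  qed
  moreover have "n * \<beta>^2 \<le> c1^2 * r"
  proof -
    have "\<beta>^2 \<le> (c1 / r)^2" using \<open>0 \<le> \<beta>\<close> \<open>\<beta> \<le> c1 / r\<close> by (intro power_mono) auto
    then have "n * \<beta>^2 \<le> n * (c1 / r)^2" using \<open>n \<ge> 1\<close> by (intro mult_left_mono) auto
    also have "n * (c1 / r)^2 = c1^2" using rr[symmetric] \<open>r \<ge> 1\<close> by (simp add: field_simps power2_eq_square)
    also have "c1^2 \<le> c1^2 * r" using \<open>r \<ge> 1\<close> mult_left_mono[of 1 r "c1^2"] by simp
    finally show ?thesis .
  qed
  moreover have "(2 * c1 + c2^2 + c1^2) * r \<le> A / 10 * r" using A_large \<open>r \<ge> 1\<close> by (intro mult_right_mono) auto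
  moreover have "14/10 * (A * r) \<le> 3/2 * s - s^2 / n"
    using assms \<open>r \<ge> 1\<close> by (intro quadratic_growth_ge) (auto simp: r_def)
  ultimately show ?thesis unfolding r_def[symmetric] by (simp add: algebra_simps)
qed

lemma exp_neg_le_inverse:
  fixes x :: real
  assumes "x > 0"
  shows "exp (- x) \<le> 1 / x"
proof -
  have "x \<le> exp x" using exp_ge_add_one_self[of x] by linarith
  then have "1 / exp x \<le> 1 / x" using assms by (intro divide_left_mono) auto
  then show ?thesis by (simp add: exp_minus inverse_eq_divide)
qed

context cluster_pair
begin

lemma cluster_bias_growth:
  assumes tau: "\<tau> = 1 \<or> \<tau> = -1" and conn: "connected_on E S"
    and b_small: "real b / real d \<le> c1 * real n powr (-1/2)"
    and lambda_small: "walk_lambda E S \<le> c2 * real n powr (-1/4)"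
    and "A > 0" and A_small: "A * sqrt (real n) \<le> real n / 10" and A_large: "2 * c1 + c2^2 + c1^2 \<le> A / 10"
    and biased: "A * sqrt (real n) \<le> (\<Sum>u\<in>S. \<tau> * spin (c u))"
  shows "measure_pmf.prob (two_choices_step E V c) {c'. (\<Sum>u\<in>S. \<tau> * spin (c' u)) < 6/5 * A * sqrt (real n)}
    \<le> 200 / A^2"
proof -
  define \<epsilon> where "\<epsilon> = A * sqrt (real n) / 10"
  have "\<epsilon> \<ge> 0" using \<open>A > 0\<close> by (simp add: \<epsilon>_def)
  have exponent: "- (\<epsilon>^2) / (2 * real n) = - (A^2 / 200)"
    using n_pos by (simp add: \<epsilon>_def power_mult_distrib power_divide field_simps)
  have exp_bound: "exp (- (\<epsilon>^2) / (2 * real n)) \<le> 200 / A^2"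
    unfolding exponent using exp_neg_le_inverse[of "A^2 / 200"] \<open>A > 0\<close> by simp
  have "\<bar>\<Sum>u\<in>S. \<tau> * spin (c u)\<bar> \<le> real (card S)"
    using tau by (intro abs_sum_le_card) (auto simp: spin_def)
  then have "13/10 * (A * sqrt (real n)) \<le> 3/2 * (\<Sum>u\<in>S. \<tau> * spin (c u)) - (\<Sum>u\<in>S. \<tau> * spin (c u))^2 / real n
      - 2 * real n * (real b / real d) - (walk_lambda E S)^2 * real n - real n * (real b / real d)^2"
    using n_pos \<open>A > 0\<close> card_S walk_lambda_nonneg
    by (intro drift_lower_bound_numeric[OF _ _ b_small _ lambda_small _ biased _ A_small A_large]) auto
  then have "measure_pmf.prob (two_choices_step E V c)
      {c'. (\<Sum>u\<in>S. \<tau> * spin (c' u)) \<le> 13/10 * (A * sqrt (real n)) - \<epsilon>} \<le> 200 / A^2"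
    using two_choices_step_lower_tail[OF tau conn \<open>\<epsilon> \<ge> 0\<close>] exp_bound by (meson order.trans)
  moreover have "measure_pmf.prob (two_choices_step E V c)
      {c'. (\<Sum>u\<in>S. \<tau> * spin (c' u)) < 6/5 * A * sqrt (real n)}
    \<le> measure_pmf.prob (two_choices_step E V c)
      {c'. (\<Sum>u\<in>S. \<tau> * spin (c' u)) \<le> 13/10 * (A * sqrt (real n)) - \<epsilon>}"
    by (intro measure_pmf.finite_measure_mono) (auto simp: \<epsilon>_def)
  ultimately show ?thesis by linarith
qed

end

section \<open>Polarization of the two clusters\<close>

definition polarized :: "nat set \<Rightarrow> nat set \<Rightarrow> real \<Rightarrow> config \<Rightarrow> bool" where
  "polarized V1 V2 h c \<longleftrightarrow> h \<le> real_of_int (bias V1 c) \<and> h \<le> - real_of_int (bias V2 c)"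

lemma polarized_mono: "h' \<le> h \<Longrightarrow> polarized V1 V2 h c \<Longrightarrow> polarized V1 V2 h' c"
  unfolding polarized_def by linarith

lemma degree_pos_if_not_bipartite:
  assumes "finite S" and "\<not> bipartite_on E S" and degree: "\<forall>u\<in>S. card (nbrs E S u) = D"
  shows "D > 0"
proof (rule ccontr)
  assume "\<not> D > 0"
  then have "nbrs E S u = {}" if "u \<in> S" for u
    using degree that \<open>finite S\<close> by (simp add: nbrs_def)
  then have "bipartite_on E S" unfolding bipartite_on_def nbrs_def by blast
  then show False using \<open>\<not> bipartite_on E S\<close> by simp
qed

lemma clustered_regular_cluster_pair:
  assumes cr: "clustered_regular E V1 V2 n d b" and "n > 0"
  shows "cluster_pair E (V1 \<union> V2) V1 V2 n d b (d - b)" and "cluster_pair E (V1 \<union> V2) V2 V1 n d b (d - b)"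
proof -
  have f1: "finite V1" and f2: "finite V2" and disj: "V1 \<inter> V2 = {}"
    and cV1: "card V1 = n" and cV2: "card V2 = n" and symE: "\<And>u v. E u v = E v u" and "b \<le> d"
    and x1: "\<forall>u\<in>V1. card (nbrs E V2 u) = b" and x2: "\<forall>u\<in>V2. card (nbrs E V1 u) = b"
    and i1: "\<forall>u\<in>V1. card (nbrs E V1 u) = d - b" and i2: "\<forall>u\<in>V2. card (nbrs E V2 u) = d - b"
    and nb1: "\<not> bipartite_on E V1"
    using cr unfolding clustered_regular_def by auto
  have "d - b > 0" using degree_pos_if_not_bipartite[OF f1 nb1 i1] .
  show "cluster_pair E (V1 \<union> V2) V1 V2 n d b (d - b)"
    by unfold_locales (use f1 f2 disj cV1 cV2 symE x1 x2 i1 \<open>b \<le> d\<close> \<open>d - b > 0\<close> \<open>n > 0\<close> in auto)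
  show "cluster_pair E (V1 \<union> V2) V2 V1 n d b (d - b)"
    by unfold_locales (use f1 f2 disj cV1 cV2 symE x1 x2 i2 \<open>b \<le> d\<close> \<open>d - b > 0\<close> \<open>n > 0\<close> in auto)
qed

lemma polarized_growth_step:
  assumes cr: "clustered_regular E V1 V2 n d b" and "n > 0"
    and b_small: "real b / real d \<le> c1 * real n powr (-1/2)"
    and lambda_small: "cluster_lambda E V1 V2 \<le> c2 * real n powr (-1/4)"
    and "A > 0" and A_small: "A * sqrt (real n) \<le> real n / 10" and A_large: "2 * c1 + c2^2 + c1^2 \<le> A / 10"
    and pol: "polarized V1 V2 (A * sqrt (real n)) c"
  shows "measure_pmf.prob (two_choices_step E (V1 \<union> V2) c)
    {c'. \<not> polarized V1 V2 (6/5 * A * sqrt (real n)) c'} \<le> 400 / A^2"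
proof -
  interpret C1: cluster_pair E "V1 \<union> V2" V1 V2 n d b "d - b"
    by (rule clustered_regular_cluster_pair(1)[OF cr \<open>n > 0\<close>])
  interpret C2: cluster_pair E "V1 \<union> V2" V2 V1 n d b "d - b"
    by (rule clustered_regular_cluster_pair(2)[OF cr \<open>n > 0\<close>])
  have conn1: "connected_on E V1" and conn2: "connected_on E V2"
    using cr unfolding clustered_regular_def by auto
  have bias1: "real_of_int (bias V1 c) = (\<Sum>u\<in>V1. 1 * spin (c u))" for c
    using bias_eq_sum_spin[OF C1.finite_S] by simp
  have bias2: "- real_of_int (bias V2 c) = (\<Sum>u\<in>V2. (-1) * spin (c u))" for c
    using bias_eq_sum_spin[OF C1.finite_T] by (simp add: sum_negf)
  have lambda1: "walk_lambda E V1 \<le> c2 * real n powr (-1/4)"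
    and lambda2: "walk_lambda E V2 \<le> c2 * real n powr (-1/4)"
    using lambda_small by (simp_all add: cluster_lambda_eq_max)
  let ?U1 = "{c'. (\<Sum>u\<in>V1. 1 * spin (c' u)) < 6/5 * A * sqrt (real n)}"
  let ?U2 = "{c'. (\<Sum>u\<in>V2. (-1) * spin (c' u)) < 6/5 * A * sqrt (real n)}"
  have "{c'. \<not> polarized V1 V2 (6/5 * A * sqrt (real n)) c'} = ?U1 \<union> ?U2"
    unfolding polarized_def bias1 bias2 by auto
  then have "measure_pmf.prob (two_choices_step E (V1 \<union> V2) c)
      {c'. \<not> polarized V1 V2 (6/5 * A * sqrt (real n)) c'}
    \<le> measure_pmf.prob (two_choices_step E (V1 \<union> V2) c) ?U1
      + measure_pmf.prob (two_choices_step E (V1 \<union> V2) c) ?U2"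
    by (simp add: measure_Un_le)
  also have "\<dots> \<le> 200 / A^2 + 200 / A^2"
  proof (intro add_mono)
    show "measure_pmf.prob (two_choices_step E (V1 \<union> V2) c) ?U1 \<le> 200 / A^2"
      by (rule C1.cluster_bias_growth[OF _ conn1 b_small lambda1 \<open>A > 0\<close> A_small A_large])
        (use pol in \<open>auto simp: polarized_def bias1\<close>)
    show "measure_pmf.prob (two_choices_step E (V1 \<union> V2) c) ?U2 \<le> 200 / A^2"
      by (rule C2.cluster_bias_growth[OF _ conn2 b_small lambda2 \<open>A > 0\<close> A_small A_large])
        (use pol in \<open>auto simp: polarized_def bias2\<close>)
  qed
  finally show ?thesis by simp
qed

lemma prob_init_config_polarized:
  assumes "finite V1" and "finite V2" and "V1 \<inter> V2 = {}" and "card V1 = n" and "card V2 = n"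
  shows "measure_pmf.prob (init_config (V1 \<union> V2)) {c. polarized V1 V2 h c}
    = (measure_pmf.prob (binomial_pmf n (1/2)) {k. (real n + h) / 2 \<le> real k})^2"
proof -
  have red: "real_of_int (bias V1 c) = 2 * real (card {u\<in>V1. c u}) - real n" for c
    using bias_eq_card_red[of V1 c] assms by simp
  have blue: "- real_of_int (bias V2 c) = 2 * real (card {u\<in>V2. \<not> c u}) - real n" for c
    using neg_bias_eq_card_blue[of V2 c] assms by simp
  have "{c. polarized V1 V2 h c} =
      {c. (real n + h) / 2 \<le> real (card {u\<in>V1. c u}) \<and> (real n + h) / 2 \<le> real (card {u\<in>V2. \<not> c u})}"
    unfolding polarized_def red blue by auto
  then show ?thesis using prob_init_config_red_blue[OF assms, of "(real n + h) / 2"] by (simp only:)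
qed

lemma ceiling_le_floor_double:
  fixes y :: real
  assumes "y \<ge> 1"
  shows "nat \<lceil>y\<rceil> \<le> nat \<lfloor>2 * y\<rfloor>"
proof -
  have "real_of_int \<lceil>y\<rceil> < y + 1" by linarith
  then have "\<lceil>y\<rceil> \<le> \<lfloor>2 * y\<rfloor>" using assms by (simp add: le_floor_iff)
  then show ?thesis by (rule nat_mono)
qed

lemma le_power_ceiling_log:
  fixes x r :: real
  assumes "x > 0" and "r > 1"
  shows "x \<le> r ^ nat \<lceil>ln x / ln r\<rceil>"
proof -
  have "ln x / ln r \<le> real (nat \<lceil>ln x / ln r\<rceil>)" by linarith
  then have "ln x \<le> real (nat \<lceil>ln x / ln r\<rceil>) * ln r" using assms by (simp add: divide_le_eq)
  then have "exp (ln x) \<le> exp (real (nat \<lceil>ln x / ln r\<rceil>) * ln r)" by simp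
  then show ?thesis using assms by (simp add: exp_of_nat_mult)
qed

lemma polarized_chain_hits:
  fixes c1 c2 A0 :: real
  assumes cr: "clustered_regular E V1 V2 n d b" and "n > 0"
    and b_small: "real b / real d \<le> c1 * real n powr (-1/2)"
    and lambda_small: "cluster_lambda E V1 V2 \<le> c2 * real n powr (-1/4)"
    and "A0 \<ge> 60" and A0_large: "A0 \<ge> 10 * (2 * c1 + c2^2 + c1^2)"
    and n_large: "ln (real n) \<le> sqrt (real n) / 10" and horizon: "ln (real n) \<le> A0 * (6/5)^k"
    and pol: "polarized V1 V2 (A0 * sqrt (real n)) c"
  shows "measure_pmf.prob (chain_traj (two_choices_step E (V1 \<union> V2)) (return_pmf c) k)
      (hits (polarized V1 V2 (sqrt (real n) * ln (real n)))) \<ge> 1 - 1400 / A0^2"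
proof (rule multiplicative_drift_hits[where L = "ln (real n)" and G = "\<lambda>A. polarized V1 V2 (A * sqrt (real n))"])
  show "polarized V1 V2 (sqrt (real n) * ln (real n)) c'"
    if "ln (real n) \<le> A" "polarized V1 V2 (A * sqrt (real n)) c'" for A c'
  proof -
    have "sqrt (real n) * ln (real n) \<le> A * sqrt (real n)"
      using mult_right_mono[OF that(1), of "sqrt (real n)"] by (simp add: mult.commute)
    then show ?thesis using polarized_mono that(2) by blast
  qed
  show "measure_pmf.prob (two_choices_step E (V1 \<union> V2) c')
      {c''. \<not> polarized V1 V2 (6/5 * A * sqrt (real n)) c''} \<le> 400 / A^2"
    if "A0 \<le> A" "A < ln (real n)" "polarized V1 V2 (A * sqrt (real n)) c'" for A c'
  proof (rule polarized_growth_step[OF cr \<open>n > 0\<close> b_small lambda_small _ _ _ that(3)])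
    have "A * sqrt (real n) \<le> sqrt (real n) / 10 * sqrt (real n)"
      using that n_large by (intro mult_right_mono) auto
    then show "A * sqrt (real n) \<le> real n / 10" by simp
  qed (use that \<open>A0 \<ge> 60\<close> A0_large in auto)
qed (use \<open>A0 \<ge> 60\<close> horizon pol in auto)

lemma two_choices_polarizes:
  fixes c1 c2 A0 \<theta> :: real
  assumes cr: "clustered_regular E V1 V2 n d b"
    and b_small: "real b / real d \<le> c1 * real n powr (-1/2)"
    and lambda_small: "cluster_lambda E V1 V2 \<le> c2 * real n powr (-1/4)"
    and "A0 \<ge> 60" and A0_large: "A0 \<ge> 10 * (2 * c1 + c2^2 + c1^2)"
    and binomial: "measure_pmf.prob (binomial_pmf n (1/2)) {k. real n / 2 + A0 / 2 * sqrt (real n) \<le> real k} \<ge> \<theta>"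
    and "\<theta> \<ge> 0"
    and n_large: "ln (real n) \<le> sqrt (real n) / 10" "ln (ln (real n)) \<ge> ln (6/5)" "n \<ge> 3"
  shows "measure_pmf.prob (trajectory E (V1 \<union> V2) (nat \<lfloor>2 / ln (6/5) * ln (ln (real n))\<rfloor>))
      (hits (polarized V1 V2 (sqrt (real n) * ln (real n)))) \<ge> \<theta>^2 / 2"
proof -
  have fin: "finite V1" "finite V2" "V1 \<inter> V2 = {}" "card V1 = n" "card V2 = n"
    using cr unfolding clustered_regular_def by auto
  define st where "st = two_choices_step E (V1 \<union> V2)"
  define Target where "Target = polarized V1 V2 (sqrt (real n) * ln (real n))"
  define Init where "Init = {c. polarized V1 V2 (A0 * sqrt (real n)) c}"
  define k where "k = nat \<lceil>ln (ln (real n)) / ln (6/5)\<rceil>"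
  have "ln (real n) > 0" using n_large by simp
  have "k \<le> nat \<lfloor>2 / ln (6/5) * ln (ln (real n))\<rfloor>"
    using ceiling_le_floor_double[of "ln (ln (real n)) / ln (6/5)"] n_large by (simp add: k_def)
  have "ln (real n) \<le> (6/5)^k"
    unfolding k_def by (rule le_power_ceiling_log) (use \<open>ln (real n) > 0\<close> in auto)
  also have "(6/5::real)^k \<le> A0 * (6/5)^k" using \<open>A0 \<ge> 60\<close> by simp
  finally have horizon: "ln (real n) \<le> A0 * (6/5)^k" .
  have "measure_pmf.prob (init_config (V1 \<union> V2)) Init
      = (measure_pmf.prob (binomial_pmf n (1/2)) {k. real n / 2 + A0 / 2 * sqrt (real n) \<le> real k})^2"
    using prob_init_config_polarized[OF fin] by (simp add: Init_def add_divide_distrib)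
  also have "\<dots> \<ge> \<theta>^2" using binomial \<open>\<theta> \<ge> 0\<close> by (intro power_mono) auto
  finally have init: "measure_pmf.prob (init_config (V1 \<union> V2)) Init \<ge> \<theta>^2" .
  have "A0^2 \<ge> 60^2" using \<open>A0 \<ge> 60\<close> by (intro power_mono) auto
  then have "1/2 \<le> 1 - 1400 / A0^2" by (simp add: divide_le_eq)
  have "\<theta>^2 / 2 \<le> (1 - 1400 / A0^2) * measure_pmf.prob (init_config (V1 \<union> V2)) Init"
    using init \<open>1/2 \<le> 1 - 1400 / A0^2\<close> mult_mono[of "1/2" _ "\<theta>^2"] by simp
  also have "\<dots> \<le> measure_pmf.expectation (init_config (V1 \<union> V2))
      (\<lambda>c. measure_pmf.prob (chain_traj st (return_pmf c) k) (hits Target))"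
    using polarized_chain_hits[OF cr _ b_small lambda_small \<open>A0 \<ge> 60\<close> A0_large n_large(1) horizon]
      \<open>1/2 \<le> 1 - 1400 / A0^2\<close> n_large(3)
    unfolding st_def Target_def Init_def by (intro expectation_ge_mult_prob) auto
  also have "\<dots> = measure_pmf.prob (trajectory E (V1 \<union> V2) k) (hits Target)"
    unfolding trajectory_eq_chain_traj st_def by (subst (2) chain_traj_bind) (rule measure_pmf_prob_bind[symmetric])
  also have "\<dots> \<le> measure_pmf.prob (trajectory E (V1 \<union> V2) (nat \<lfloor>2 / ln (6/5) * ln (ln (real n))\<rfloor>))
      (hits Target)"
    unfolding trajectory_eq_chain_traj by (rule prob_chain_traj_hits_mono) fact
  finally show ?thesis unfolding Target_def .
qed

theorem lemma4:
  fixes c1 c2 :: real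
  assumes "c1 > 0" and "c2 > 0"
  shows "\<exists>p > 0. \<exists>C > 0. \<exists>N :: nat. \<forall>n \<ge> N. \<forall>(E :: nat \<Rightarrow> nat \<Rightarrow> bool) V1 V2 d b.
    clustered_regular E V1 V2 n d b \<longrightarrow>
    real b / real d \<le> c1 * real n powr (-1/2) \<longrightarrow>
    cluster_lambda E V1 V2 \<le> c2 * real n powr (-1/4) \<longrightarrow>
    measure_pmf.prob (trajectory E (V1 \<union> V2) (nat \<lfloor>C * ln (ln (real n))\<rfloor>))
      {cs. \<exists>t < length cs.
             real_of_int (bias V1 (cs ! t)) \<ge> sqrt (real n) * ln (real n) \<and>
             - real_of_int (bias V2 (cs ! t)) \<ge> sqrt (real n) * ln (real n)} \<ge> p"
proof -
  define A0 where "A0 = max 60 (10 * (2 * c1 + c2^2 + c1^2))"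
  define \<theta> where "\<theta> = exp (-16 * (A0/2 + 4)^2) / 2"
  have "eventually (\<lambda>n::nat. ln (real n) \<le> sqrt (real n) / 10 \<and> ln (ln (real n)) \<ge> ln (6/5)) at_top"
    by (intro eventually_conj; real_asymp)
  then obtain N0 where N0: "\<And>n. n \<ge> N0 \<Longrightarrow> ln (real n) \<le> sqrt (real n) / 10 \<and> ln (ln (real n)) \<ge> ln (6/5)"
    unfolding eventually_at_top_linorder by blast
  define N where "N = max (max N0 3) (nat \<lceil>(16 * (A0/2 + 4))^2\<rceil>)"
  have polarizes: "\<theta>^2 / 2 \<le> measure_pmf.prob (trajectory E (V1 \<union> V2) (nat \<lfloor>2 / ln (6/5) * ln (ln (real n))\<rfloor>))
      (hits (polarized V1 V2 (sqrt (real n) * ln (real n))))"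
    if "N \<le> n" and "clustered_regular E V1 V2 n d b" and "real b / real d \<le> c1 * real n powr (-1/2)"
      and "cluster_lambda E V1 V2 \<le> c2 * real n powr (-1/4)" for n E V1 V2 d b
  proof (rule two_choices_polarizes[OF that(2-4)])
    have "real n \<ge> (16 * (A0/2 + 4))^2" using that(1) by (simp add: N_def)
    then show "\<theta> \<le> measure_pmf.prob (binomial_pmf n (1/2)) {k. real n / 2 + A0 / 2 * sqrt (real n) \<le> real k}"
      unfolding \<theta>_def by (intro binomial_half_upper_deviation) (simp_all add: A0_def)
  qed (use N0[of n] that(1) in \<open>auto simp: A0_def \<theta>_def N_def\<close>)
  have "\<theta>^2 / 2 > 0" by (simp add: \<theta>_def)
  moreover have "2 / ln (6/5::real) > 0" by simp
  ultimately show ?thesis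
    using polarizes unfolding hits_def polarized_def by blast
qed
end
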